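(* Let $KR=\{(x,y,s,t)\in\mathbb{C}^4: x^2y+x+s^2+t^3=0\}$ be the Koras-Russell cubic threefold and $H=\{x=0\}\cap KR$. Then $KR\setminus H$ has the density property.
   Context: A complex manifold $M$ has the density property if the Lie algebra generated by $\mathbb{C}$-complete holomorphic vector fields on $M$ is dense, in the compact-open topology, in the Lie algebra of all holomorphic vector fields on $M$. *)

theory Defs
  imports "HOL-Analysis.Analysis"
begin

text \<open>Complex n-space is modelled as complex ^ 'n. A complex (sub)manifold M is
  given as a subset of it; vector fields on M are maps into complex ^ 'n that
  vanish outside M.\<close>

definition complex_linear :: "(complex ^ 'n \<Rightarrow> complex ^ 'm) \<Rightarrow> bool" where
  "complex_linear L \<longleftrightarrow> (\<forall>c v. L (c *s v) = c *s L v)"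

definition holo_on :: "(complex ^ 'n \<Rightarrow> complex ^ 'm) \<Rightarrow> (complex ^ 'n) set \<Rightarrow> bool" where
  "holo_on f U \<longleftrightarrow> (\<forall>p\<in>U. \<exists>L. (f has_derivative L) (at p) \<and> complex_linear L)"

definition holo_on_set :: "(complex ^ 'n \<Rightarrow> complex ^ 'm) \<Rightarrow> (complex ^ 'n) set \<Rightarrow> bool" where
  "holo_on_set f M \<longleftrightarrow> (\<forall>p\<in>M. \<exists>U g. open U \<and> p \<in> U \<and> holo_on g U \<and>
      (\<forall>q\<in>U \<inter> M. g q = f q))"

text \<open>Holomorphic tangent vectors: velocities of (at 0 complex differentiable)
  complex curves in M.\<close>
definition tangent_vec :: "(complex ^ 'n) set \<Rightarrow> complex ^ 'n \<Rightarrow> complex ^ 'n \<Rightarrow> bool" where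
  "tangent_vec M p v \<longleftrightarrow> (\<exists>\<gamma> e. e > 0 \<and> \<gamma> ` ball 0 e \<subseteq> M \<and> \<gamma> 0 = p \<and>
      (\<gamma> has_derivative (\<lambda>z. z *s v)) (at 0))"

definition holo_vf :: "(complex ^ 'n) set \<Rightarrow> (complex ^ 'n \<Rightarrow> complex ^ 'n) \<Rightarrow> bool" where
  "holo_vf M V \<longleftrightarrow> holo_on_set V M \<and> (\<forall>p\<in>M. tangent_vec M p (V p)) \<and>
      (\<forall>p. p \<notin> M \<longrightarrow> V p = 0)"

definition complete_vf :: "(complex ^ 'n) set \<Rightarrow> (complex ^ 'n \<Rightarrow> complex ^ 'n) \<Rightarrow> bool" where
  "complete_vf M V \<longleftrightarrow> holo_vf M V \<and>
     (\<exists>\<phi> :: complex \<Rightarrow> complex ^ 'n \<Rightarrow> complex ^ 'n. \<forall>p\<in>M. \<phi> 0 p = p \<and>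
        (\<forall>t. \<phi> t p \<in> M \<and> ((\<lambda>s. \<phi> s p) has_derivative (\<lambda>s. s *s V (\<phi> t p))) (at t)))"

text \<open>Lie bracket of tangent vector fields, computed via derivatives within M
  (these are determined on tangent vectors).\<close>
definition vf_bracket :: "(complex ^ 'n) set \<Rightarrow> (complex ^ 'n \<Rightarrow> complex ^ 'n) \<Rightarrow>
    (complex ^ 'n \<Rightarrow> complex ^ 'n) \<Rightarrow> complex ^ 'n \<Rightarrow> complex ^ 'n" where
  "vf_bracket M V W p = (if p \<in> M then
      (SOME L. (W has_derivative L) (at p within M)) (V p)
    - (SOME L. (V has_derivative L) (at p within M)) (W p) else 0)"

inductive_set complete_lie_alg :: "(complex ^ 'n) set \<Rightarrow> (complex ^ 'n \<Rightarrow> complex ^ 'n) set"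
  for M where
  gen: "complete_vf M V \<Longrightarrow> V \<in> complete_lie_alg M"
| zero: "(\<lambda>p. 0) \<in> complete_lie_alg M"
| add: "V \<in> complete_lie_alg M \<Longrightarrow> W \<in> complete_lie_alg M \<Longrightarrow> (\<lambda>p. V p + W p) \<in> complete_lie_alg M"
| smult: "V \<in> complete_lie_alg M \<Longrightarrow> (\<lambda>p. c *s V p) \<in> complete_lie_alg M"
| bracket: "V \<in> complete_lie_alg M \<Longrightarrow> W \<in> complete_lie_alg M \<Longrightarrow> vf_bracket M V W \<in> complete_lie_alg M"

text \<open>Density in the compact-open topology = approximation uniformly on compacta.\<close>
definition density_property :: "(complex ^ 'n) set \<Rightarrow> bool" where
  "density_property M \<longleftrightarrow> (\<forall>V K e. holo_vf M V \<and> compact K \<and> K \<subseteq> M \<and> e > 0 \<longrightarrow>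
     (\<exists>W\<in>complete_lie_alg M. \<forall>p\<in>K. norm (V p - W p) < e))"

text \<open>Koras-Russell cubic; coordinates (x,y,s,t) = (v$1, v$2, v$3, v$4).\<close>
definition KR :: "(complex ^ 4) set" where
  "KR = {v. (v$1)^2 * v$2 + v$1 + (v$3)^2 + (v$4)^3 = 0}"

definition KR_H :: "(complex ^ 4) set" where
  "KR_H = {v \<in> KR. v$1 = 0}"

end

(* Away from H the coordinate x does not vanish, and (x, s, t) |-> (x, -(x + s^2 + t^3)/x^2, s, t)
   identifies KR - H with C^* x C^2. In these coordinates the shears x^k t^b d/ds, x^k s^a d/dt and
   the overshears x^k s t^b d/ds, x^k s^a t d/dt, x s^a t^b d/dx are complete, and brackets of them
   produce every Laurent monomial field x^k s^a t^b d/dx, d/ds, d/dt. A holomorphic vector field on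
   KR - H is determined by its x-, s- and t-components, which are separately holomorphic functions on
   C^* x C^2; the Cauchy formula on an annulus times two discs, with its geometric kernels truncated,
   approximates them uniformly on compact sets by Laurent polynomials. *)

theory Submission
  imports Defs "HOL-Complex_Analysis.Complex_Residues"
begin

definition vec4 :: "'a \<Rightarrow> 'a \<Rightarrow> 'a \<Rightarrow> 'a \<Rightarrow> 'a^4" where
  "vec4 a b c d = (\<chi> i. if i = 1 then a else if i = 2 then b else if i = 3 then c else d)"

lemma vec4_nth [simp]:
  "vec4 a b c d $ 1 = a" "vec4 a b c d $ 2 = b" "vec4 a b c d $ 3 = c" "vec4 a b c d $ 4 = d"
  by (simp_all add: vec4_def)

lemma vec4_eq_iff: "vec4 a b c d = v \<longleftrightarrow> a = v$1 \<and> b = v$2 \<and> c = v$3 \<and> d = v$4"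
  by (auto simp: vec_eq_iff forall_4)

lemma vec4_add: "vec4 a b c d + vec4 a' b' c' d' = vec4 (a + a') (b + b') (c + c') (d + d')"
  by (simp add: vec_eq_iff forall_4)

lemma vec4_diff: "vec4 a b c d - vec4 a' b' c' d' = vec4 (a - a') (b - b') (c - c') (d - d')"
  by (simp add: vec_eq_iff forall_4)

lemma vec4_scale: "k *s vec4 a b c d = vec4 (k * a) (k * b) (k * c) (k * d)"
  by (simp add: vec_eq_iff forall_4)

lemma vec4_zero: "vec4 0 0 0 0 = 0"
  by (simp add: vec_eq_iff forall_4)

lemma norm_vec4_le:
  fixes a b c d :: "'a::real_normed_vector"
  shows "norm (vec4 a b c d) \<le> norm a + norm b + norm c + norm d"
proof -
  have "norm (vec4 a b c d) = L2_set (\<lambda>i. norm (vec4 a b c d $ i)) UNIV"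
    by (simp add: norm_vec_def)
  also have "\<dots> \<le> (\<Sum>i\<in>UNIV. norm (vec4 a b c d $ i))"
    by (rule L2_set_le_sum) auto
  finally show ?thesis by (simp add: sum_4)
qed

lemma bounded_linear_vec4:
  "bounded_linear (\<lambda>(a, b, c, d). vec4 a b c d :: 'a::real_normed_vector^4)"
proof (rule bounded_linear_intro[where K = 4])
  fix x y :: "'a \<times> 'a \<times> 'a \<times> 'a"
  show "(case x + y of (a, b, c, d) \<Rightarrow> vec4 a b c d)
      = (case x of (a, b, c, d) \<Rightarrow> vec4 a b c d) + (case y of (a, b, c, d) \<Rightarrow> vec4 a b c d)"
    by (cases x; cases y) (simp add: vec4_add)
next
  fix r :: real and x :: "'a \<times> 'a \<times> 'a \<times> 'a"
  show "(case r *\<^sub>R x of (a, b, c, d) \<Rightarrow> vec4 a b c d) = r *\<^sub>R (case x of (a, b, c, d) \<Rightarrow> vec4 a b c d)"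
    by (cases x) (simp add: vec_eq_iff forall_4)
next
  fix x :: "'a \<times> 'a \<times> 'a \<times> 'a"
  obtain a b c d where x: "x = (a, b, c, d)" by (cases x) auto
  have "norm a \<le> norm x" "norm b \<le> norm x" "norm c \<le> norm x" "norm d \<le> norm x"
    unfolding x by (metis fst_conv snd_conv norm_fst_le norm_snd_le order_trans)+
  then show "norm (case x of (a, b, c, d) \<Rightarrow> vec4 a b c d) \<le> norm x * 4"
    using norm_vec4_le[of a b c d] unfolding x by simp
qed

lemma has_derivative_vec4:
  assumes "(f1 has_derivative f1') (at z within S)" "(f2 has_derivative f2') (at z within S)"
    and "(f3 has_derivative f3') (at z within S)" "(f4 has_derivative f4') (at z within S)"
  shows "((\<lambda>x. vec4 (f1 x) (f2 x) (f3 x) (f4 x)) has_derivative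
           (\<lambda>h. vec4 (f1' h) (f2' h) (f3' h) (f4' h))) (at z within S)"
  using bounded_linear.has_derivative[OF bounded_linear_vec4 has_derivative_Pair[OF assms(1)
      has_derivative_Pair[OF assms(2) has_derivative_Pair[OF assms(3-4)]]]]
  by simp

lemma continuous_on_vec4 [continuous_intros]:
  assumes "continuous_on S a" "continuous_on S b" "continuous_on S c" "continuous_on S d"
  shows "continuous_on S (\<lambda>x. vec4 (a x) (b x) (c x) (d x))"
  unfolding vec4_def
proof (rule continuous_on_vec_lambda)
  fix i :: 4
  show "continuous_on S (\<lambda>x. if i = 1 then a x else if i = 2 then b x else if i = 3 then c x else d x)"
    by (cases "i = 1"; cases "i = 2"; cases "i = 3") (simp_all add: assms)
qed

lemma has_derivative_vec_nth_comp [derivative_intros]: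
  "(f has_derivative f') F \<Longrightarrow> ((\<lambda>v. f v $ i) has_derivative (\<lambda>h. f' h $ i)) F"
  by (rule bounded_linear.has_derivative[OF bounded_linear_vec_nth])

lemma tangent_vec_derivative_unique:
  assumes "(f has_derivative L1) (at p within M)" "(f has_derivative L2) (at p within M)"
    and "tangent_vec M p v"
  shows "L1 v = L2 v"
proof -
  obtain \<gamma> e where e: "e > 0" and \<gamma>M: "\<gamma> ` ball 0 e \<subseteq> M" and \<gamma>0: "\<gamma> 0 = p"
    and \<gamma>': "(\<gamma> has_derivative (\<lambda>z. z *s v)) (at 0)"
    using assms(3) unfolding tangent_vec_def by blast
  have chain: "((f \<circ> \<gamma>) has_derivative (L \<circ> (\<lambda>z. z *s v))) (at 0)"
    if "(f has_derivative L) (at p within M)" for L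
  proof -
    have "((f \<circ> \<gamma>) has_derivative (L \<circ> (\<lambda>z. z *s v))) (at 0 within ball 0 e)"
      by (rule diff_chain_within[OF has_derivative_at_withinI[OF \<gamma>']
            has_derivative_subset[OF _ \<gamma>M]]) (use that \<gamma>0 in simp)
    moreover have "at 0 within ball 0 e = at (0::complex)"
      by (rule at_within_open) (use e in auto)
    ultimately show ?thesis by simp
  qed
  have "L1 \<circ> (\<lambda>z. z *s v) = L2 \<circ> (\<lambda>z. z *s v)"
    by (rule has_derivative_unique[OF chain[OF assms(1)] chain[OF assms(2)]])
  then show ?thesis by (metis comp_apply vector_smult_lid)
qed

lemma tangent_vec_zero_set_derivative:
  assumes "tangent_vec M p v" "M \<subseteq> {q. F q = 0}" "(F has_derivative F') (at p)"
  shows "F' v = 0"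
proof -
  obtain \<gamma> e where e: "e > 0" and \<gamma>M: "\<gamma> ` ball 0 e \<subseteq> M" and \<gamma>0: "\<gamma> 0 = p"
    and \<gamma>': "(\<gamma> has_derivative (\<lambda>z. z *s v)) (at 0)"
    using assms(1) unfolding tangent_vec_def by blast
  have "((F \<circ> \<gamma>) has_derivative (F' \<circ> (\<lambda>z. z *s v))) (at 0)"
    using diff_chain_at[OF \<gamma>'] assms(3) \<gamma>0 by simp
  moreover have "((F \<circ> \<gamma>) has_derivative (\<lambda>_. 0)) (at 0)"
    by (rule has_derivative_transform_within_open[where s = "ball 0 e" and f = "\<lambda>_. 0"])
      (use e \<gamma>M assms(2) in \<open>auto simp: image_subset_iff subset_iff\<close>)
  ultimately have "F' \<circ> (\<lambda>z. z *s v) = (\<lambda>_. 0)"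
    by (rule has_derivative_unique)
  then show ?thesis by (metis comp_apply vector_smult_lid)
qed

lemma holo_vf_continuous_on:
  assumes "holo_vf M V"
  shows "continuous_on M V"
proof -
  have "continuous (at p within M) V" if p: "p \<in> M" for p
  proof -
    obtain U g where U: "open U" "p \<in> U" and g: "holo_on g U" and eq: "\<forall>q\<in>U \<inter> M. g q = V q"
      using assms p unfolding holo_vf_def holo_on_set_def by blast
    obtain L where L: "(g has_derivative L) (at p)" using g U unfolding holo_on_def by blast
    have gc: "continuous (at p within M) g"
      using has_derivative_continuous[OF has_derivative_at_withinI[OF L]] .
    obtain d where d: "d > 0" "ball p d \<subseteq> U" using U open_contains_ball by blast
    show ?thesis
    proof (rule continuous_transform_within[OF gc d(1) p])
      fix q assume "q \<in> M" "dist q p < d"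
      then have "q \<in> U \<inter> M" using d(2) by (auto simp: dist_commute)
      then show "g q = V q" using eq by blast
    qed
  qed
  then show ?thesis by (simp add: continuous_on_eq_continuous_within)
qed

lemma holo_vf_comp_curve_holomorphic:
  assumes V: "holo_vf M V" and Z: "open Z" and gM: "g ` Z \<subseteq> M"
    and g': "\<And>z. z \<in> Z \<Longrightarrow> \<exists>d. (g has_derivative (\<lambda>h. h *s d)) (at z)"
  shows "(\<lambda>z. V (g z) $ i) holomorphic_on Z"
  unfolding holomorphic_on_def
proof
  fix z assume z: "z \<in> Z"
  obtain d where gd: "(g has_derivative (\<lambda>h. h *s d)) (at z)" using g'[OF z] by blast
  have "continuous_on Z g"
    using g' by (metis continuous_at_imp_continuous_on has_derivative_continuous)
  obtain U G where U: "open U" "g z \<in> U" and G: "holo_on G U" and eq: "\<forall>q\<in>U \<inter> M. G q = V q"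
    using V gM z unfolding holo_vf_def holo_on_set_def by blast
  obtain L where L: "(G has_derivative L) (at (g z))" and L_lin: "complex_linear L"
    using G U unfolding holo_on_def by blast
  have "((\<lambda>w. G (g w) $ i) has_derivative (\<lambda>h. L (h *s d) $ i)) (at z)"
    using has_derivative_vec_nth_comp[OF diff_chain_at[OF gd L]] by (simp add: o_def)
  moreover have "(\<lambda>h. L (h *s d) $ i) = (*) (L d $ i)"
    using L_lin unfolding complex_linear_def by (auto simp: fun_eq_iff mult.commute)
  ultimately have "((\<lambda>w. G (g w) $ i) has_field_derivative L d $ i) (at z)"
    unfolding has_field_derivative_def by simp
  moreover have "open (Z \<inter> g -` U)"
    by (rule continuous_open_preimage[OF \<open>continuous_on Z g\<close> Z U(1)])
  ultimately have "((\<lambda>w. V (g w) $ i) has_field_derivative L d $ i) (at z)"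
    by (rule has_field_derivative_transform_within_open) (use z U eq gM in auto)
  then show "(\<lambda>w. V (g w) $ i) field_differentiable at z within Z"
    unfolding field_differentiable_def by (blast intro: has_field_derivative_at_within)
qed

section \<open>Cauchy integrals over circles and annuli\<close>

lemma contour_integral_circlepath_0:
  "contour_integral (circlepath 0 \<rho>) g =
     2 * of_real pi * \<i> * integral {0..1} (\<lambda>u. g (circlepath 0 \<rho> u) * circlepath 0 \<rho> u)"
  unfolding contour_integral_integral vector_derivative_circlepath
  by (simp add: circlepath field_simps flip: integral_mult_right)

lemma norm_circlepath_0: "\<rho> > 0 \<Longrightarrow> norm (circlepath 0 \<rho> u) = \<rho>"
  by (simp add: circlepath norm_mult norm_exp_eq_Re)

lemma continuous_on_circlepath_0 [continuous_intros]:
  "continuous_on S g \<Longrightarrow> continuous_on S (\<lambda>x. circlepath 0 \<rho> (g x))"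
  unfolding circlepath by (intro continuous_intros)

lemma Cauchy_integral_circlepath_0:
  assumes h: "h holomorphic_on cball 0 \<rho>" and z: "norm z < \<rho>"
  shows "integral {0..1} (\<lambda>u. h (circlepath 0 \<rho> u) / (1 - z / circlepath 0 \<rho> u)) = h z"
proof -
  have \<rho>: "\<rho> > 0" using z norm_ge_zero by (meson le_less_trans)
  have "((\<lambda>\<zeta>. h \<zeta> / (\<zeta> - z)) has_contour_integral (2 * of_real pi * \<i> * h z)) (circlepath 0 \<rho>)"
    by (rule Cauchy_integral_circlepath_simple) (use h z in auto)
  from contour_integral_unique[OF this]
  have "2 * of_real pi * \<i> * integral {0..1} (\<lambda>u. h (circlepath 0 \<rho> u) / (circlepath 0 \<rho> u - z) * circlepath 0 \<rho> u)
      = 2 * of_real pi * \<i> * h z"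
    unfolding contour_integral_circlepath_0 .
  then have "integral {0..1} (\<lambda>u. h (circlepath 0 \<rho> u) / (circlepath 0 \<rho> u - z) * circlepath 0 \<rho> u) = h z"
    by simp
  moreover have "h (circlepath 0 \<rho> u) / (circlepath 0 \<rho> u - z) * circlepath 0 \<rho> u
      = h (circlepath 0 \<rho> u) / (1 - z / circlepath 0 \<rho> u)" for u
  proof -
    have "circlepath 0 \<rho> u \<noteq> 0" "circlepath 0 \<rho> u \<noteq> z"
      using norm_circlepath_0[OF \<rho>, of u] z \<rho> by auto
    then show ?thesis by (simp add: field_simps)
  qed
  ultimately show ?thesis by simp
qed

lemma contour_integral_circlepath_0_inverse_inside:
  assumes "norm x < \<rho>"
  shows "contour_integral (circlepath 0 \<rho>) (\<lambda>\<zeta>. 1 / (\<zeta> - x)) = 2 * of_real pi * \<i>"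
  using Cauchy_integral_circlepath_simple[of "\<lambda>_. 1" 0 \<rho> x] assms by (simp add: contour_integral_unique)

lemma contour_integral_circlepath_0_inverse_outside:
  assumes "0 < \<rho>" "\<rho> < norm x"
  shows "contour_integral (circlepath 0 \<rho>) (\<lambda>\<zeta>. 1 / (\<zeta> - x)) = 0"
  by (rule contour_integral_unique, rule Cauchy_theorem_convex_simple[where S = "ball 0 (norm x)"])
     (use assms in \<open>auto intro!: holomorphic_intros simp: path_image_circlepath\<close>)

lemma contour_integral_circlepath_0_difference_quotient:
  assumes h: "h holomorphic_on -{0}" and "0 < \<rho>" "norm x \<noteq> \<rho>"
  shows "contour_integral (circlepath 0 \<rho>) (\<lambda>\<zeta>. if \<zeta> = x then deriv h x else (h \<zeta> - h x) / (\<zeta> - x))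
       = contour_integral (circlepath 0 \<rho>) (\<lambda>\<zeta>. h \<zeta> / (\<zeta> - x))
         - h x * contour_integral (circlepath 0 \<rho>) (\<lambda>\<zeta>. 1 / (\<zeta> - x))"
proof -
  have x: "x \<notin> path_image (circlepath 0 \<rho>)"
    using assms by (auto simp: path_image_circlepath)
  have "continuous_on (path_image (circlepath 0 \<rho>)) h"
    by (rule holomorphic_on_imp_continuous_on[OF holomorphic_on_subset[OF h]])
       (use assms in \<open>auto simp: path_image_circlepath\<close>)
  with x have i1: "(\<lambda>\<zeta>. h \<zeta> / (\<zeta> - x)) contour_integrable_on circlepath 0 \<rho>"
    and i2: "(\<lambda>\<zeta>. 1 / (\<zeta> - x)) contour_integrable_on circlepath 0 \<rho>"
    by (auto intro!: contour_integrable_continuous_circlepath continuous_intros)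
  have "contour_integral (circlepath 0 \<rho>) (\<lambda>\<zeta>. if \<zeta> = x then deriv h x else (h \<zeta> - h x) / (\<zeta> - x))
      = contour_integral (circlepath 0 \<rho>) (\<lambda>\<zeta>. h \<zeta> / (\<zeta> - x) - h x * (1 / (\<zeta> - x)))"
    by (rule contour_integral_cong) (use x in \<open>auto simp: diff_divide_distrib\<close>)
  also have "\<dots> = contour_integral (circlepath 0 \<rho>) (\<lambda>\<zeta>. h \<zeta> / (\<zeta> - x))
      - contour_integral (circlepath 0 \<rho>) (\<lambda>\<zeta>. h x * (1 / (\<zeta> - x)))"
    by (rule contour_integral_diff[OF i1 contour_integrable_lmul[OF i2]])
  finally show ?thesis
    by (simp only: contour_integral_lmul[OF i2])
qed

lemma Cauchy_integral_annulus_contour: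
  assumes h: "h holomorphic_on -{0}" and \<rho>: "0 < \<rho>1" "\<rho>1 < norm x" "norm x < \<rho>2"
  shows "contour_integral (circlepath 0 \<rho>2) (\<lambda>\<zeta>. h \<zeta> / (\<zeta> - x))
       - contour_integral (circlepath 0 \<rho>1) (\<lambda>\<zeta>. h \<zeta> / (\<zeta> - x)) = 2 * of_real pi * \<i> * h x"
proof -
  let ?g = "\<lambda>\<zeta>. if \<zeta> = x then deriv h x else (h \<zeta> - h x) / (\<zeta> - x)"
  have "?g holomorphic_on -{0}"
    by (rule pole_lemma_open[OF h]) auto
  then have "contour_integral (circlepath 0 \<rho>2) ?g = contour_integral (circlepath 0 \<rho>1) ?g"
    by (intro contour_integral_circlepath_eq(3)[of UNIV]) (use \<rho> in \<open>auto simp: Compl_eq_Diff_UNIV\<close>)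
  with \<rho> show ?thesis
    using contour_integral_circlepath_0_difference_quotient[OF h, of \<rho>1 x]
      contour_integral_circlepath_0_difference_quotient[OF h, of \<rho>2 x]
    by (simp add: contour_integral_circlepath_0_inverse_inside contour_integral_circlepath_0_inverse_outside
        algebra_simps)
qed

lemma integrable_circlepath_0_cauchy_kernel:
  assumes "continuous_on (-{0}) h" "0 < \<rho>" "norm x \<noteq> \<rho>"
  shows "(\<lambda>u. h (circlepath 0 \<rho> u) / (circlepath 0 \<rho> u - x) * circlepath 0 \<rho> u) integrable_on {0..1}"
proof (rule integrable_continuous_interval)
  have off: "circlepath 0 \<rho> u \<noteq> 0" "circlepath 0 \<rho> u \<noteq> x" for u
    using norm_circlepath_0[OF assms(2), of u] assms(2,3) by auto
  then have "continuous_on {0..1} (\<lambda>u. h (circlepath 0 \<rho> u))"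
    by (intro continuous_on_compose2[OF assms(1) continuous_on_circlepath_0[OF continuous_on_id]]) auto
  with off show "continuous_on {0..1} (\<lambda>u. h (circlepath 0 \<rho> u) / (circlepath 0 \<rho> u - x) * circlepath 0 \<rho> u)"
    by (intro continuous_intros) auto
qed

lemma Cauchy_integral_annulus:
  assumes h: "h holomorphic_on -{0}" and \<rho>: "0 < \<rho>1" "\<rho>1 < norm x" "norm x < \<rho>2"
  shows "integral {0..1} (\<lambda>u. h (circlepath 0 \<rho>2 u) / (1 - x / circlepath 0 \<rho>2 u)
       + h (circlepath 0 \<rho>1 u) * (circlepath 0 \<rho>1 u / x) / (1 - circlepath 0 \<rho>1 u / x)) = h x"
proof -
  let ?k = "\<lambda>\<rho> u. h (circlepath 0 \<rho> u) / (circlepath 0 \<rho> u - x) * circlepath 0 \<rho> u"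
  have "2 * of_real pi * \<i> * (integral {0..1} (?k \<rho>2) - integral {0..1} (?k \<rho>1)) = 2 * of_real pi * \<i> * h x"
    using Cauchy_integral_annulus_contour[OF h \<rho>] unfolding contour_integral_circlepath_0 right_diff_distrib .
  then have "h x = integral {0..1} (?k \<rho>2) - integral {0..1} (?k \<rho>1)"
    by simp
  also have "\<dots> = integral {0..1} (\<lambda>u. ?k \<rho>2 u - ?k \<rho>1 u)"
    using \<rho> by (intro integral_diff[symmetric] integrable_circlepath_0_cauchy_kernel
        holomorphic_on_imp_continuous_on[OF h]) auto
  also have "\<dots> = integral {0..1} (\<lambda>u. h (circlepath 0 \<rho>2 u) / (1 - x / circlepath 0 \<rho>2 u)
       + h (circlepath 0 \<rho>1 u) * (circlepath 0 \<rho>1 u / x) / (1 - circlepath 0 \<rho>1 u / x))"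
  proof (rule integral_cong)
    have outer: "a / (w - x) * w = a / (1 - x / w)" if "w \<noteq> 0" "w \<noteq> x" for a w
      using that by (simp add: field_simps)
    have inner: "- (a / (w - x) * w) = a * (w / x) / (1 - w / x)" if "x \<noteq> 0" "w \<noteq> x" for a w
      using that by (simp add: field_simps)
    fix u
    have "- ?k \<rho>1 u = h (circlepath 0 \<rho>1 u) * (circlepath 0 \<rho>1 u / x) / (1 - circlepath 0 \<rho>1 u / x)"
      using \<rho> norm_circlepath_0[of \<rho>1 u] by (intro inner) auto
    moreover have "?k \<rho>2 u = h (circlepath 0 \<rho>2 u) / (1 - x / circlepath 0 \<rho>2 u)"
      using \<rho> norm_circlepath_0[of \<rho>2 u] by (intro outer) auto
    ultimately show "?k \<rho>2 u - ?k \<rho>1 u = h (circlepath 0 \<rho>2 u) / (1 - x / circlepath 0 \<rho>2 u)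
       + h (circlepath 0 \<rho>1 u) * (circlepath 0 \<rho>1 u / x) / (1 - circlepath 0 \<rho>1 u / x)"
      by (simp only: diff_conv_add_uminus)
  qed
  finally show ?thesis ..
qed

section \<open>Uniform Laurent approximation of separately holomorphic functions\<close>

lemma geometric_sum_approx:
  fixes q :: "'a::real_normed_field"
  assumes q: "norm q \<le> 1/2"
  shows "norm (1 / (1 - q)) \<le> 2" and "norm (\<Sum>n<N. q^n) \<le> 2"
    and "norm (1 / (1 - q) - (\<Sum>n<N. q^n)) \<le> 2 * (1/2)^N"
proof -
  have d: "norm (1 - q) \<ge> 1/2"
    using norm_triangle_ineq2[of 1 q] q by simp
  then show "norm (1 / (1 - q)) \<le> 2"
    by (simp add: norm_divide divide_le_eq)
  have "norm (\<Sum>n<N. q^n) \<le> (\<Sum>n<N. (1/2::real)^n)"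
    by (rule order_trans[OF norm_sum sum_mono]) (auto simp: norm_power intro!: power_mono q)
  also have "\<dots> = 2 * (1 - (1/2)^N)" by (simp add: sum_gp_strict)
  also have "\<dots> \<le> 2" by simp
  finally show "norm (\<Sum>n<N. q^n) \<le> 2" .
  have "q \<noteq> 1" using q by auto
  then have "1 / (1 - q) - (\<Sum>n<N. q^n) = q^N / (1 - q)"
    unfolding sum_gp_strict by (simp add: field_simps)
  then have "norm (1 / (1 - q) - (\<Sum>n<N. q^n)) = norm q ^ N / norm (1 - q)"
    by (simp add: norm_divide norm_power)
  also have "\<dots> \<le> (1/2)^N / (1/2)"
    by (intro frac_le power_mono q d) auto
  finally show "norm (1 / (1 - q) - (\<Sum>n<N. q^n)) \<le> 2 * (1/2)^N" by simp
qed

lemma norm_triple_product_diff_le: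
  fixes X X' c c' d d' :: "'a::real_normed_field"
  assumes "norm (X - X') \<le> E1" "norm c \<le> 2" "norm d \<le> 2" "norm X' \<le> K"
    and "norm (c - c') \<le> E2" "norm c' \<le> 2" "norm (d - d') \<le> E3"
  shows "norm (X * c * d - X' * c' * d') \<le> 4 * E1 + 2 * K * E2 + 2 * K * E3"
proof -
  have nonneg: "0 \<le> E1" "0 \<le> E2" "0 \<le> E3" "0 \<le> K"
    using assms norm_ge_zero by (meson order_trans)+
  define u v w where "u = (X - X') * c * d" "v = X' * (c - c') * d" "w = X' * c' * (d - d')"
  have "X * c * d - X' * c' * d' = u + v + w"
    unfolding u_v_w_def by (simp add: algebra_simps)
  then have "norm (X * c * d - X' * c' * d') \<le> norm u + norm v + norm w"
    using norm_triangle_ineq[of "u + v" w] norm_triangle_ineq[of u v] by simp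
  also have "\<dots> = norm (X - X') * norm c * norm d + norm X' * norm (c - c') * norm d
      + norm X' * norm c' * norm (d - d')"
    unfolding u_v_w_def by (simp add: norm_mult)
  also have "\<dots> \<le> E1 * 2 * 2 + K * E2 * 2 + K * 2 * E3"
    by (intro add_mono mult_mono assms) (simp_all add: nonneg)
  finally show ?thesis by (simp add: algebra_simps)
qed

definition laurent_poly ::
    "nat \<Rightarrow> (nat \<Rightarrow> nat \<Rightarrow> nat \<Rightarrow> complex) \<Rightarrow> (nat \<Rightarrow> nat \<Rightarrow> nat \<Rightarrow> complex) \<Rightarrow> complex \<Rightarrow> complex \<Rightarrow> complex \<Rightarrow> complex" where
  "laurent_poly N A B x s t =
     (\<Sum>n<N. \<Sum>m<N. \<Sum>l<N. (A n m l * x^n + B n m l * x powi (- (int n + 1))) * s^m * t^l)"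

lemma integral_laurent_poly:
  assumes "\<And>n m l. A n m l integrable_on S" "\<And>n m l. B n m l integrable_on S"
  shows "integral S (\<lambda>q. laurent_poly N (\<lambda>n m l. A n m l q) (\<lambda>n m l. B n m l q) x s t)
       = laurent_poly N (\<lambda>n m l. integral S (A n m l)) (\<lambda>n m l. integral S (B n m l)) x s t"
proof -
  define T where "T n m l q = (A n m l q * x^n + B n m l q * x powi (- (int n + 1))) * s^m * t^l" for n m l q
  have T_integrable: "T n m l integrable_on S" for n m l
    unfolding T_def using assms by (intro integrable_on_mult_left integrable_add)
  have T_integral: "integral S (T n m l)
      = (integral S (A n m l) * x^n + integral S (B n m l) * x powi (- (int n + 1))) * s^m * t^l" for n m l
    unfolding T_def using assms by (simp add: integral_add integrable_on_mult_left)
  have "integral S (\<lambda>q. laurent_poly N (\<lambda>n m l. A n m l q) (\<lambda>n m l. B n m l q) x s t)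
      = integral S (\<lambda>q. \<Sum>n<N. \<Sum>m<N. \<Sum>l<N. T n m l q)"
    unfolding laurent_poly_def T_def ..
  also have "\<dots> = (\<Sum>n<N. \<Sum>m<N. \<Sum>l<N. integral S (T n m l))"
    by (simp add: integral_sum integrable_sum T_integrable)
  finally show ?thesis
    unfolding T_integral laurent_poly_def .
qed

definition in_annulus_bidisc :: "real \<Rightarrow> real \<Rightarrow> complex \<Rightarrow> complex \<Rightarrow> complex \<Rightarrow> bool" where
  "in_annulus_bidisc r R x s t \<longleftrightarrow> r \<le> norm x \<and> norm x \<le> R \<and> norm s \<le> R \<and> norm t \<le> R"

abbreviation unit_cube :: "(real \<times> real \<times> real) set" where
  "unit_cube \<equiv> cbox (0, 0, 0) (1, 1, 1)"

lemma integral_unit_cube_iterated: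
  fixes g :: "real \<times> real \<times> real \<Rightarrow> 'a::euclidean_space"
  assumes g: "continuous_on unit_cube g"
  shows "integral unit_cube g = integral {0..1} (\<lambda>w. integral {0..1} (\<lambda>v. integral {0..1} (\<lambda>u. g (w, v, u))))"
proof -
  have "integral unit_cube g = integral (cbox 0 1) (\<lambda>w. integral (cbox (0, 0) (1, 1)) (\<lambda>y. g (w, y)))"
    by (rule integral_prod_continuous) (use g in simp)
  also have "\<dots> = integral (cbox 0 1) (\<lambda>w. integral (cbox 0 1) (\<lambda>v. integral (cbox 0 1) (\<lambda>u. g (w, v, u))))"
  proof (rule integral_cong)
    fix w :: real assume w: "w \<in> cbox 0 1"
    have "continuous_on (cbox (0, 0) (1, 1)) (\<lambda>y. g (w, y))"
      by (rule continuous_on_compose2[OF g]) (use w in \<open>auto intro: continuous_intros\<close>)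
    then show "integral (cbox (0, 0) (1, 1)) (\<lambda>y. g (w, y))
        = integral (cbox 0 1) (\<lambda>v. integral (cbox 0 1) (\<lambda>u. g (w, v, u)))"
      by (simp add: integral_prod_continuous)
  qed
  finally show ?thesis by (simp add: box_real(2))
qed

locale separately_holomorphic =
  fixes f :: "complex \<Rightarrow> complex \<Rightarrow> complex \<Rightarrow> complex"
  assumes continuous: "continuous_on {q. fst q \<noteq> 0} (\<lambda>q. f (fst q) (fst (snd q)) (snd (snd q)))"
    and holomorphic_x: "\<And>s t. (\<lambda>x. f x s t) holomorphic_on -{0}"
    and holomorphic_s: "\<And>x t. x \<noteq> 0 \<Longrightarrow> (\<lambda>s. f x s t) holomorphic_on UNIV"
    and holomorphic_t: "\<And>x s. x \<noteq> 0 \<Longrightarrow> (\<lambda>t. f x s t) holomorphic_on UNIV"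

locale separately_holomorphic_region = separately_holomorphic +
  fixes r R :: real
  assumes radii: "0 < r" "r \<le> R"
begin

text \<open>Circles of radii 2R and r/2 keep every ratio in the geometric kernels below at most 1/2.\<close>

abbreviation outer :: "real \<Rightarrow> complex" where "outer \<equiv> circlepath 0 (2 * R)"

abbreviation inner :: "real \<Rightarrow> complex" where "inner \<equiv> circlepath 0 (r / 2)"

lemma norm_outer: "norm (outer u) = 2 * R" and norm_inner: "norm (inner u) = r / 2"
  using norm_circlepath_0[of "2 * R" u] norm_circlepath_0[of "r / 2" u] radii by simp_all

lemma outer_nonzero: "outer u \<noteq> 0" and inner_nonzero: "inner u \<noteq> 0"
  using norm_outer[of u] norm_inner[of u] radii by auto

lemma in_annulus_bidisc_ratios:
  assumes "in_annulus_bidisc r R x s t"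
  shows "x \<noteq> 0" "norm (x / outer u) \<le> 1/2" "norm (inner u / x) \<le> 1/2"
    "norm (s / outer u) \<le> 1/2" "norm (t / outer u) \<le> 1/2"
proof -
  have x: "r \<le> norm x" "norm x \<le> R" and "norm s \<le> R" "norm t \<le> R"
    using assms unfolding in_annulus_bidisc_def by auto
  then show "norm (x / outer u) \<le> 1/2" "norm (s / outer u) \<le> 1/2" "norm (t / outer u) \<le> 1/2"
    using radii unfolding norm_divide norm_outer by (auto simp: field_simps)
  show "x \<noteq> 0" using x radii by auto
  then show "norm (inner u / x) \<le> 1/2"
    using x radii unfolding norm_divide norm_inner by (auto simp: field_simps)
qed

text \<open>Points of the unit cube are triples (w, v, u): u runs over the circles in the x-plane,
  v over the circle in the s-plane and w over the circle in the t-plane.\<close>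

definition "f_outer q = f (outer (snd (snd q))) (outer (fst (snd q))) (outer (fst q))"

definition "f_inner q = f (inner (snd (snd q))) (outer (fst (snd q))) (outer (fst q))"

lemma continuous_on_f_outer: "continuous_on S f_outer"
  unfolding f_outer_def
  by (rule continuous_on_compose2[OF continuous, where f = "\<lambda>q. (outer (snd (snd q)), outer (fst (snd q)), outer (fst q))",
        simplified]) (auto intro!: continuous_intros simp: outer_nonzero)

lemma continuous_on_f_inner: "continuous_on S f_inner"
  unfolding f_inner_def
  by (rule continuous_on_compose2[OF continuous, where f = "\<lambda>q. (inner (snd (snd q)), outer (fst (snd q)), outer (fst q))",
        simplified]) (auto intro!: continuous_intros simp: inner_nonzero)

definition cauchy_kernel :: "complex \<Rightarrow> complex \<Rightarrow> complex \<Rightarrow> real \<times> real \<times> real \<Rightarrow> complex" where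
  "cauchy_kernel x s t q =
     (f_outer q * (1 / (1 - x / outer (snd (snd q))))
      + f_inner q * (inner (snd (snd q)) / x) * (1 / (1 - inner (snd (snd q)) / x)))
     * (1 / (1 - s / outer (fst (snd q)))) * (1 / (1 - t / outer (fst q)))"

definition cauchy_kernel_trunc :: "nat \<Rightarrow> complex \<Rightarrow> complex \<Rightarrow> complex \<Rightarrow> real \<times> real \<times> real \<Rightarrow> complex" where
  "cauchy_kernel_trunc N x s t q =
     (f_outer q * (\<Sum>n<N. (x / outer (snd (snd q)))^n)
      + f_inner q * (inner (snd (snd q)) / x) * (\<Sum>n<N. (inner (snd (snd q)) / x)^n))
     * (\<Sum>n<N. (s / outer (fst (snd q)))^n) * (\<Sum>n<N. (t / outer (fst q))^n)"

lemma continuous_on_cauchy_kernel: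
  assumes "in_annulus_bidisc r R x s t"
  shows "continuous_on S (cauchy_kernel x s t)"
proof -
  have nonzero: "1 - q \<noteq> 0" if "norm q \<le> 1/2" for q :: complex
    using that by auto
  have "1 - x / outer u \<noteq> 0" "1 - inner u / x \<noteq> 0" "1 - s / outer u \<noteq> 0" "1 - t / outer u \<noteq> 0"
    for u using nonzero in_annulus_bidisc_ratios[OF assms] by blast+
  with in_annulus_bidisc_ratios(1)[OF assms] show ?thesis
    unfolding cauchy_kernel_def
    by (intro continuous_intros continuous_on_f_outer continuous_on_f_inner) (simp_all add: outer_nonzero)
qed

lemma continuous_on_cauchy_kernel_trunc:
  assumes "in_annulus_bidisc r R x s t"
  shows "continuous_on S (cauchy_kernel_trunc N x s t)"
  unfolding cauchy_kernel_trunc_def using in_annulus_bidisc_ratios(1)[OF assms]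
  by (intro continuous_intros continuous_on_f_outer continuous_on_f_inner) (auto simp: outer_nonzero)

lemma integral_cauchy_kernel:
  assumes "in_annulus_bidisc r R x s t"
  shows "integral unit_cube (cauchy_kernel x s t) = f x s t"
proof -
  have x: "x \<noteq> 0" "r \<le> norm x" "norm x \<le> R" and s: "norm s \<le> R" and t: "norm t \<le> R"
    using assms radii unfolding in_annulus_bidisc_def by auto
  have x_step: "integral {0..1} (\<lambda>u. cauchy_kernel x s t (w, v, u))
      = f x (outer v) (outer w) * (1 / (1 - s / outer v)) * (1 / (1 - t / outer w))" for v w
    using Cauchy_integral_annulus[OF holomorphic_x, of "r/2" x "2*R"] x radii
    unfolding cauchy_kernel_def f_outer_def f_inner_def by (simp add: integral_mult_left)
  have s_step: "integral {0..1} (\<lambda>v. f x (outer v) (outer w) * (1 / (1 - s / outer v))) = f x s (outer w)" for w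
    using Cauchy_integral_circlepath_0[OF holomorphic_on_subset[OF holomorphic_s[OF x(1)]], of "2*R" s] s radii
    by simp
  have t_step: "integral {0..1} (\<lambda>w. f x s (outer w) * (1 / (1 - t / outer w))) = f x s t"
    using Cauchy_integral_circlepath_0[OF holomorphic_on_subset[OF holomorphic_t[OF x(1)]], of "2*R" t] t radii
    by simp
  have "integral unit_cube (cauchy_kernel x s t)
      = integral {0..1} (\<lambda>w. integral {0..1} (\<lambda>v. integral {0..1} (\<lambda>u. cauchy_kernel x s t (w, v, u))))"
    by (rule integral_unit_cube_iterated[OF continuous_on_cauchy_kernel[OF assms]])
  also have "\<dots> = f x s t"
    unfolding x_step by (simp only: integral_mult_left s_step t_step)
  finally show ?thesis .
qed

end

context separately_holomorphic_region
begin

definition "pos_coeff_integrand n m l q =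
  f_outer q * (1 / outer (snd (snd q)))^n * (1 / outer (fst (snd q)))^m * (1 / outer (fst q))^l"

definition "neg_coeff_integrand n m l q =
  f_inner q * inner (snd (snd q))^(n+1) * (1 / outer (fst (snd q)))^m * (1 / outer (fst q))^l"

lemma continuous_on_pos_coeff_integrand: "continuous_on S (pos_coeff_integrand n m l)"
  and continuous_on_neg_coeff_integrand: "continuous_on S (neg_coeff_integrand n m l)"
  unfolding pos_coeff_integrand_def neg_coeff_integrand_def
  by (intro continuous_intros continuous_on_f_outer continuous_on_f_inner; simp add: outer_nonzero)+

lemma cauchy_kernel_trunc_eq_laurent_poly:
  assumes "x \<noteq> 0"
  shows "cauchy_kernel_trunc N x s t q =
    laurent_poly N (\<lambda>n m l. pos_coeff_integrand n m l q) (\<lambda>n m l. neg_coeff_integrand n m l q) x s t"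
proof -
  define u v w where "u = snd (snd q)" "v = fst (snd q)" "w = fst q"
  have powi: "x powi (- (int n + 1)) = 1 / x^(n+1)" for n
    by (metis of_nat_Suc power_int_minus power_int_of_nat inverse_eq_divide add.commute Suc_eq_plus1)
  have "f_inner q * (inner u / x) * (\<Sum>n<N. (inner u / x)^n)
      = (\<Sum>n<N. f_inner q * inner u^(n+1) * x powi (- (int n + 1)))"
    unfolding sum_distrib_left powi by (intro sum.cong refl) (simp add: power_divide)
  then have x_part: "f_outer q * (\<Sum>n<N. (x / outer u)^n) + f_inner q * (inner u / x) * (\<Sum>n<N. (inner u / x)^n)
      = (\<Sum>n<N. f_outer q * (1 / outer u)^n * x^n + f_inner q * inner u^(n+1) * x powi (- (int n + 1)))"
    by (simp add: sum_distrib_left sum.distrib power_divide)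
  have "cauchy_kernel_trunc N x s t q =
      (\<Sum>n<N. f_outer q * (1 / outer u)^n * x^n + f_inner q * inner u^(n+1) * x powi (- (int n + 1)))
      * (\<Sum>m<N. (1 / outer v)^m * s^m) * (\<Sum>l<N. (1 / outer w)^l * t^l)"
    unfolding cauchy_kernel_trunc_def u_v_w_def[symmetric] x_part by (simp add: power_divide)
  also have "\<dots> = (\<Sum>n<N. \<Sum>m<N. \<Sum>l<N.
      (f_outer q * (1 / outer u)^n * x^n + f_inner q * inner u^(n+1) * x powi (- (int n + 1)))
      * ((1 / outer v)^m * s^m) * ((1 / outer w)^l * t^l))"
    by (subst sum_product, subst sum_distrib_right, subst sum_distrib_right, subst sum_distrib_left, rule refl)
  also have "\<dots> = laurent_poly N (\<lambda>n m l. pos_coeff_integrand n m l q) (\<lambda>n m l. neg_coeff_integrand n m l q) x s t"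
    unfolding laurent_poly_def pos_coeff_integrand_def neg_coeff_integrand_def u_v_w_def
    by (intro sum.cong refl) (simp add: algebra_simps)
  finally show ?thesis .
qed

lemma norm_cauchy_kernel_trunc_diff_le:
  assumes "in_annulus_bidisc r R x s t" and M: "norm (f_outer q) \<le> M" "norm (f_inner q) \<le> M"
  shows "norm (cauchy_kernel x s t q - cauchy_kernel_trunc N x s t q) \<le> 36 * M * (1/2)^N"
proof -
  define qx qi qs qt where "qx = x / outer (snd (snd q))" "qi = inner (snd (snd q)) / x"
    "qs = s / outer (fst (snd q))" "qt = t / outer (fst q)"
  have small: "norm qx \<le> 1/2" "norm qi \<le> 1/2" "norm qs \<le> 1/2" "norm qt \<le> 1/2"
    unfolding qx_qi_qs_qt_def using in_annulus_bidisc_ratios[OF assms(1)] by auto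
  note gx = geometric_sum_approx[OF small(1)] and gi = geometric_sum_approx[OF small(2)]
    and gs = geometric_sum_approx[OF small(3)] and gt = geometric_sum_approx[OF small(4)]
  have M0: "M \<ge> 0" using M(1) norm_ge_zero order_trans by blast
  define X X' where "X = f_outer q * (1 / (1 - qx)) + f_inner q * qi * (1 / (1 - qi))"
    "X' = f_outer q * (\<Sum>n<N. qx^n) + f_inner q * qi * (\<Sum>n<N. qi^n)"
  have "norm (X - X') = norm (f_outer q * (1 / (1 - qx) - (\<Sum>n<N. qx^n))
      + f_inner q * (qi * (1 / (1 - qi) - (\<Sum>n<N. qi^n))))"
    unfolding X_X'_def by (simp add: algebra_simps)
  also have "\<dots> \<le> norm (f_outer q) * norm (1 / (1 - qx) - (\<Sum>n<N. qx^n))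
      + norm (f_inner q) * (norm qi * norm (1 / (1 - qi) - (\<Sum>n<N. qi^n)))"
    by (rule order_trans[OF norm_triangle_ineq]) (simp add: norm_mult)
  also have "\<dots> \<le> M * (2 * (1/2)^N) + M * (1/2 * (2 * (1/2)^N))"
    by (intro add_mono mult_mono gx gi small M) (simp_all add: M0)
  finally have X_diff: "norm (X - X') \<le> 3 * M * (1/2)^N" by simp
  have "norm X' \<le> norm (f_outer q) * norm (\<Sum>n<N. qx^n) + norm (f_inner q) * (norm qi * norm (\<Sum>n<N. qi^n))"
    unfolding X_X'_def by (rule order_trans[OF norm_triangle_ineq]) (simp add: norm_mult mult.assoc)
  also have "\<dots> \<le> M * 2 + M * (1/2 * 2)"
    by (intro add_mono mult_mono gx gi small M) (simp_all add: M0)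
  finally have X'_bound: "norm X' \<le> 3 * M" by simp
  have "cauchy_kernel x s t q - cauchy_kernel_trunc N x s t q
      = X * (1 / (1 - qs)) * (1 / (1 - qt)) - X' * (\<Sum>n<N. qs^n) * (\<Sum>n<N. qt^n)"
    unfolding cauchy_kernel_def cauchy_kernel_trunc_def X_X'_def qx_qi_qs_qt_def ..
  also have "norm \<dots> \<le> 4 * (3 * M * (1/2)^N) + 2 * (3 * M) * (2 * (1/2)^N) + 2 * (3 * M) * (2 * (1/2)^N)"
    by (rule norm_triple_product_diff_le[OF X_diff gs(1) gt(1) X'_bound gs(3) gs(2) gt(3)])
  finally show ?thesis by simp
qed

lemma integral_cauchy_kernel_trunc:
  assumes "in_annulus_bidisc r R x s t"
  shows "integral unit_cube (cauchy_kernel_trunc N x s t) =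
    laurent_poly N (\<lambda>n m l. integral unit_cube (pos_coeff_integrand n m l))
                   (\<lambda>n m l. integral unit_cube (neg_coeff_integrand n m l)) x s t"
proof -
  have "cauchy_kernel_trunc N x s t =
      (\<lambda>q. laurent_poly N (\<lambda>n m l. pos_coeff_integrand n m l q) (\<lambda>n m l. neg_coeff_integrand n m l q) x s t)"
    using cauchy_kernel_trunc_eq_laurent_poly[OF in_annulus_bidisc_ratios(1)[OF assms]] by auto
  then show ?thesis
    by (simp add: integral_laurent_poly integrable_continuous
        continuous_on_pos_coeff_integrand continuous_on_neg_coeff_integrand)
qed

lemma norm_laurent_poly_approx_le:
  assumes xst: "in_annulus_bidisc r R x s t"
    and M: "\<And>q. q \<in> unit_cube \<Longrightarrow> norm (f_outer q) \<le> M \<and> norm (f_inner q) \<le> M"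
  shows "norm (f x s t - laurent_poly N (\<lambda>n m l. integral unit_cube (pos_coeff_integrand n m l))
                                      (\<lambda>n m l. integral unit_cube (neg_coeff_integrand n m l)) x s t)
           \<le> 36 * M * (1/2)^N"
proof -
  have "norm (f_outer (0, 0, 0)) \<le> M"
    using M[of "(0, 0, 0)"] by simp
  then have "M \<ge> 0"
    using norm_ge_zero order_trans by blast
  have "f x s t - laurent_poly N (\<lambda>n m l. integral unit_cube (pos_coeff_integrand n m l))
                                 (\<lambda>n m l. integral unit_cube (neg_coeff_integrand n m l)) x s t
      = integral unit_cube (cauchy_kernel x s t) - integral unit_cube (cauchy_kernel_trunc N x s t)"
    by (simp only: integral_cauchy_kernel[OF xst] integral_cauchy_kernel_trunc[OF xst])
  also have "\<dots> = integral unit_cube (\<lambda>q. cauchy_kernel x s t q - cauchy_kernel_trunc N x s t q)"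
    by (intro integral_diff[symmetric] integrable_continuous continuous_on_cauchy_kernel[OF xst]
        continuous_on_cauchy_kernel_trunc[OF xst])
  also have "norm \<dots> \<le> 36 * M * (1/2)^N * Henstock_Kurzweil_Integration.content unit_cube"
    by (intro has_integral_bound[OF _ integrable_integral] integrable_continuous continuous_intros
        continuous_on_cauchy_kernel[OF xst] continuous_on_cauchy_kernel_trunc[OF xst]
        norm_cauchy_kernel_trunc_diff_le[OF xst]) (use M \<open>M \<ge> 0\<close> in auto)
  finally show ?thesis
    by (simp add: content_Pair)
qed

lemma laurent_poly_approx_region:
  assumes "e > 0"
  obtains N A B where "\<And>x s t. in_annulus_bidisc r R x s t \<Longrightarrow> norm (f x s t - laurent_poly N A B x s t) < e"
proof -
  obtain M1 M2 where M1: "M1 > 0" "\<And>q. q \<in> unit_cube \<Longrightarrow> norm (f_outer q) \<le> M1"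
    and M2: "M2 > 0" "\<And>q. q \<in> unit_cube \<Longrightarrow> norm (f_inner q) \<le> M2"
    using compact_imp_bounded[OF compact_continuous_image[OF continuous_on_f_outer compact_cbox]]
      compact_imp_bounded[OF compact_continuous_image[OF continuous_on_f_inner compact_cbox]]
    unfolding bounded_pos by (metis image_eqI)
  define M where "M = max M1 M2"
  have M: "M > 0" "\<And>q. q \<in> unit_cube \<Longrightarrow> norm (f_outer q) \<le> M \<and> norm (f_inner q) \<le> M"
    unfolding M_def using M1 M2 by (auto simp: le_max_iff_disj)
  obtain N where "(1/2::real)^N < e / (36 * M)"
    using real_arch_pow_inv[of "e / (36 * M)" "1/2"] assms M by auto
  then have "36 * M * (1/2)^N < e" using M by (simp add: field_simps)
  then show ?thesis
    using norm_laurent_poly_approx_le[OF _ M(2), of _ _ _ N] by (intro that) (rule le_less_trans)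
qed

end

lemma (in separately_holomorphic) laurent_poly_approx:
  assumes "0 < r" "r \<le> R" "e > 0"
  obtains N A B where "\<And>x s t. in_annulus_bidisc r R x s t \<Longrightarrow> norm (f x s t - laurent_poly N A B x s t) < e"
proof -
  interpret separately_holomorphic_region f r R
    by unfold_locales (use assms in auto)
  show ?thesis
    by (rule laurent_poly_approx_region[OF assms(3) that])
qed

section \<open>The Koras-Russell threefold off H in the coordinates x, s, t\<close>

definition KR_y :: "complex \<Rightarrow> complex \<Rightarrow> complex \<Rightarrow> complex" where
  "KR_y x s t = - (x + s^2 + t^3) / x^2"

definition KR_point :: "complex \<Rightarrow> complex \<Rightarrow> complex \<Rightarrow> complex^4" where
  "KR_point x s t = vec4 x (KR_y x s t) s t"

lemma KR_point_nth [simp]: "KR_point x s t $ 1 = x" "KR_point x s t $ 3 = s" "KR_point x s t $ 4 = t"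
  by (simp_all add: KR_point_def)

lemma mem_KR_not_KR_H_iff: "v \<in> KR \<and> v \<notin> KR_H \<longleftrightarrow> v$1 \<noteq> 0 \<and> v$2 = KR_y (v$1) (v$3) (v$4)"
proof -
  have "(v$1)^2 * v$2 + v$1 + (v$3)^2 + (v$4)^3 = 0 \<longleftrightarrow> v$2 = KR_y (v$1) (v$3) (v$4)"
    if "v$1 \<noteq> 0"
    using that unfolding KR_y_def by (auto simp: eq_divide_eq eq_neg_iff_add_eq_0 algebra_simps)
  then show ?thesis unfolding KR_H_def KR_def by auto
qed

lemma mem_KR_minus_KR_H_iff: "v \<in> KR - KR_H \<longleftrightarrow> v$1 \<noteq> 0 \<and> v$2 = KR_y (v$1) (v$3) (v$4)"
  using mem_KR_not_KR_H_iff by simp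

lemmas mem_KR_minus_KR_H = mem_KR_minus_KR_H_iff mem_KR_not_KR_H_iff

lemma KR_point_in_KR_minus_KR_H: "x \<noteq> 0 \<Longrightarrow> KR_point x s t \<in> KR - KR_H"
  by (simp add: mem_KR_minus_KR_H KR_point_def)

lemma KR_point_coords: "v \<in> KR - KR_H \<Longrightarrow> KR_point (v$1) (v$3) (v$4) = v"
  by (simp add: mem_KR_minus_KR_H KR_point_def vec4_eq_iff)

text \<open>The y-component that the linearised equation (2xy + 1) a + x^2 y' + 2 s b + 3 t^2 c = 0 forces
  on a tangent vector with x-, s- and t-components a, b, c.\<close>

definition KR_tangent_y :: "complex^4 \<Rightarrow> complex \<Rightarrow> complex \<Rightarrow> complex \<Rightarrow> complex" where
  "KR_tangent_y p a b c = - ((2 * p$1 * p$2 + 1) * a + 2 * p$3 * b + 3 * (p$4)^2 * c) / (p$1)^2"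

definition KR_tangent :: "complex^4 \<Rightarrow> complex \<Rightarrow> complex \<Rightarrow> complex \<Rightarrow> complex^4" where
  "KR_tangent p a b c = vec4 a (KR_tangent_y p a b c) b c"

lemma KR_tangent_nth [simp]:
  "KR_tangent p a b c $ 1 = a" "KR_tangent p a b c $ 2 = KR_tangent_y p a b c"
  "KR_tangent p a b c $ 3 = b" "KR_tangent p a b c $ 4 = c"
  by (simp_all add: KR_tangent_def)

lemma KR_tangent_add_scale:
  "KR_tangent p a b c + k *s KR_tangent p a' b' c' = KR_tangent p (a + k * a') (b + k * b') (c + k * c')"
  by (cases "p$1 = 0") (simp_all add: KR_tangent_def KR_tangent_y_def vec4_add vec4_scale vec4_eq_iff field_simps)

lemma KR_tangent_diff:
  "KR_tangent p a b c - KR_tangent p a' b' c' = KR_tangent p (a - a') (b - b') (c - c')"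
  by (cases "p$1 = 0") (simp_all add: KR_tangent_def KR_tangent_y_def vec4_diff vec4_eq_iff field_simps)

lemma KR_tangent_zero: "KR_tangent p 0 0 0 = 0"
  by (simp add: KR_tangent_def KR_tangent_y_def vec4_zero)

lemma has_derivative_KR_point:
  assumes "(x has_field_derivative a) (at z within S)" "(s has_field_derivative b) (at z within S)"
    and "(t has_field_derivative c) (at z within S)" and "x z \<noteq> 0"
  shows "((\<lambda>z. KR_point (x z) (s z) (t z)) has_derivative
           (\<lambda>h. h *s KR_tangent (KR_point (x z) (s z) (t z)) a b c)) (at z within S)"
proof -
  have "((\<lambda>z. KR_y (x z) (s z) (t z)) has_field_derivative
          KR_tangent_y (KR_point (x z) (s z) (t z)) a b c) (at z within S)"
    unfolding KR_y_def
    by (rule derivative_eq_intros assms refl | simp add: assms(4))+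
       (use assms(4) in \<open>simp add: KR_tangent_y_def KR_point_def KR_y_def field_simps\<close>)
  with assms show ?thesis
    unfolding KR_point_def has_field_derivative_def
    by (auto intro!: has_derivative_eq_rhs[OF has_derivative_vec4]
             simp: KR_tangent_def vec4_scale KR_point_def mult.commute)
qed

lemma tangent_vec_KR_tangent:
  assumes p: "p \<in> KR - KR_H"
  shows "tangent_vec (KR - KR_H) p (KR_tangent p a b c)"
proof -
  have p1: "p$1 \<noteq> 0" using p by (simp add: mem_KR_minus_KR_H)
  have a1: "norm a + 1 > 0" using norm_ge_zero[of a] by linarith
  define e where "e = norm (p$1) / (norm a + 1)"
  have e: "e > 0" unfolding e_def using p1 a1 by simp
  have nz: "p$1 + z * a \<noteq> 0" if "z \<in> ball 0 e" for z
  proof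
    assume "p$1 + z * a = 0"
    then have "norm (p$1) = norm z * norm a" by (metis add_eq_0_iff norm_minus_cancel norm_mult)
    also have "\<dots> \<le> norm z * (norm a + 1)" by (simp add: mult_left_mono)
    also have "\<dots> < e * (norm a + 1)"
      using that a1 by (intro mult_strict_right_mono) auto
    also have "\<dots> = norm (p$1)" unfolding e_def using a1 by simp
    finally show False by simp
  qed
  define \<gamma> where "\<gamma> = (\<lambda>z. KR_point (p$1 + z * a) (p$3 + z * b) (p$4 + z * c))"
  have "\<gamma> ` ball 0 e \<subseteq> KR - KR_H" unfolding \<gamma>_def using nz KR_point_in_KR_minus_KR_H by auto
  moreover have "\<gamma> 0 = p" unfolding \<gamma>_def using KR_point_coords[OF p] by simp
  moreover have "(\<gamma> has_derivative (\<lambda>h. h *s KR_tangent (\<gamma> 0) a b c)) (at 0)"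
    unfolding \<gamma>_def by (rule has_derivative_KR_point) (auto intro!: derivative_eq_intros simp: p1)
  ultimately show ?thesis unfolding tangent_vec_def using e by auto
qed

lemma tangent_vec_KR_eq_KR_tangent:
  assumes p: "p \<in> KR - KR_H" and v: "tangent_vec (KR - KR_H) p v"
  shows "v = KR_tangent p (v$1) (v$3) (v$4)"
proof -
  let ?F = "\<lambda>q::complex^4. (q$1)^2 * q$2 + q$1 + (q$3)^2 + (q$4)^3"
  have nth: "((\<lambda>q. q$i) has_derivative (\<lambda>h. h$i)) (at p)" for i
    using bounded_linear_imp_has_derivative[OF bounded_linear_vec_nth] .
  have "(?F has_derivative (\<lambda>h. (2 * p$1 * p$2 + 1) * h$1 + (p$1)^2 * h$2
                                  + 2 * p$3 * h$3 + 3 * (p$4)^2 * h$4)) (at p)"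
    by (rule has_derivative_eq_rhs, (rule derivative_eq_intros nth refl)+)
       (simp add: fun_eq_iff algebra_simps power2_eq_square power3_eq_cube)
  from tangent_vec_zero_set_derivative[OF v _ this]
  have "(2 * p$1 * p$2 + 1) * v$1 + (p$1)^2 * v$2 + 2 * p$3 * v$3 + 3 * (p$4)^2 * v$4 = 0"
    by (auto simp: KR_def)
  moreover have "p$1 \<noteq> 0" using p by (simp add: mem_KR_minus_KR_H)
  ultimately have "v$2 = KR_tangent_y p (v$1) (v$3) (v$4)"
    unfolding KR_tangent_y_def by (simp add: eq_divide_eq eq_neg_iff_add_eq_0 algebra_simps)
  then show ?thesis by (simp add: KR_tangent_def vec_eq_iff forall_4)
qed

text \<open>The derivative of v \<mapsto> KR_tangent_y v (\<alpha> v) (\<beta> v) (\<gamma> v) in direction h, where da, db, dc are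
  the derivatives of \<alpha>, \<beta>, \<gamma> in direction h.\<close>

definition KR_tangent_y_deriv ::
    "complex^4 \<Rightarrow> complex \<Rightarrow> complex \<Rightarrow> complex \<Rightarrow> complex \<Rightarrow> complex \<Rightarrow> complex \<Rightarrow> complex^4 \<Rightarrow> complex" where
  "KR_tangent_y_deriv v a b c da db dc h =
     - ((2 * h$1 * v$2 + 2 * v$1 * h$2) * a + (2 * v$1 * v$2 + 1) * da + 2 * h$3 * b + 2 * v$3 * db
        + 6 * v$4 * h$4 * c + 3 * (v$4)^2 * dc) / (v$1)^2
     + 2 * ((2 * v$1 * v$2 + 1) * a + 2 * v$3 * b + 3 * (v$4)^2 * c) * h$1 / (v$1)^3"

lemma has_derivative_KR_tangent_field:
  assumes "(\<alpha> has_derivative Da) (at v)" "(\<beta> has_derivative Db) (at v)" "(\<gamma> has_derivative Dc) (at v)"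
    and "v$1 \<noteq> 0"
  shows "((\<lambda>v. KR_tangent v (\<alpha> v) (\<beta> v) (\<gamma> v)) has_derivative
           (\<lambda>h. vec4 (Da h) (KR_tangent_y_deriv v (\<alpha> v) (\<beta> v) (\<gamma> v) (Da h) (Db h) (Dc h) h) (Db h) (Dc h)))
         (at v)"
proof -
  have nth: "((\<lambda>q. q$i) has_derivative (\<lambda>h. h$i)) (at v)" for i
    using bounded_linear_imp_has_derivative[OF bounded_linear_vec_nth] .
  have "((\<lambda>v. KR_tangent_y v (\<alpha> v) (\<beta> v) (\<gamma> v)) has_derivative
          (\<lambda>h. KR_tangent_y_deriv v (\<alpha> v) (\<beta> v) (\<gamma> v) (Da h) (Db h) (Dc h) h)) (at v)"
    unfolding KR_tangent_y_def
    apply (rule has_derivative_eq_rhs)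
     apply (rule derivative_eq_intros assms nth refl | simp add: assms(4))+
    apply (rule ext)
    apply (simp add: KR_tangent_y_deriv_def assms(4) field_simps)
    apply algebra
    done
  then show ?thesis
    unfolding KR_tangent_def by (rule has_derivative_vec4[OF assms(1) _ assms(2,3)])
qed

lemma complex_linear_KR_tangent_field_deriv:
  assumes "\<And>k h. Da (k *s h) = k * Da h" "\<And>k h. Db (k *s h) = k * Db h" "\<And>k h. Dc (k *s h) = k * Dc h"
  shows "complex_linear (\<lambda>h. vec4 (Da h) (KR_tangent_y_deriv v a b c (Da h) (Db h) (Dc h) h) (Db h) (Dc h))"
  unfolding complex_linear_def vec4_scale
  by (simp add: assms KR_tangent_y_deriv_def field_simps)

text \<open>This identity is why the bracket of two fields tangent to KR - H is again tangent.\<close>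

lemma KR_tangent_y_deriv_antisym:
  assumes "p$1 \<noteq> 0"
  shows "KR_tangent_y_deriv p a2 b2 c2 A B C (KR_tangent p a1 b1 c1)
       - KR_tangent_y_deriv p a1 b1 c1 A' B' C' (KR_tangent p a2 b2 c2)
       = KR_tangent_y p (A - A') (B - B') (C - C')"
proof -
  have e: "2 * p$1 * (- N / (p$1)^2) = - 2 * N / p$1" for N
    using assms by (simp add: power2_eq_square field_simps)
  show ?thesis
    unfolding KR_tangent_y_deriv_def KR_tangent_nth KR_tangent_y_def using assms
    apply (simp only: e)
    apply (simp add: divide_simps)
    apply (simp add: algebra_simps power2_eq_square power3_eq_cube)
    done
qed

definition has_xst_derivative ::
    "(complex^4 \<Rightarrow> complex) \<Rightarrow> (complex^4 \<Rightarrow> complex) \<Rightarrow> (complex^4 \<Rightarrow> complex) \<Rightarrow> (complex^4 \<Rightarrow> complex) \<Rightarrow> bool" where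
  "has_xst_derivative \<phi> \<phi>x \<phi>s \<phi>t \<longleftrightarrow>
     (\<forall>v. v$1 \<noteq> 0 \<longrightarrow> (\<phi> has_derivative (\<lambda>h. \<phi>x v * h$1 + \<phi>s v * h$3 + \<phi>t v * h$4)) (at v))"

definition KR_field ::
    "(complex^4 \<Rightarrow> complex) \<Rightarrow> (complex^4 \<Rightarrow> complex) \<Rightarrow> (complex^4 \<Rightarrow> complex) \<Rightarrow> complex^4 \<Rightarrow> complex^4" where
  "KR_field \<alpha> \<beta> \<gamma> v = (if v \<in> KR - KR_H then KR_tangent v (\<alpha> v) (\<beta> v) (\<gamma> v) else 0)"

lemma KR_field_in: "v \<in> KR - KR_H \<Longrightarrow> KR_field \<alpha> \<beta> \<gamma> v = KR_tangent v (\<alpha> v) (\<beta> v) (\<gamma> v)"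
  by (simp add: KR_field_def)

lemma KR_field_out: "v \<notin> KR - KR_H \<Longrightarrow> KR_field \<alpha> \<beta> \<gamma> v = 0"
  unfolding KR_field_def by (simp only: if_False)

lemma KR_field_cong:
  "(\<And>v. v \<in> KR - KR_H \<Longrightarrow> \<alpha> v = \<alpha>' v \<and> \<beta> v = \<beta>' v \<and> \<gamma> v = \<gamma>' v) \<Longrightarrow>
     KR_field \<alpha> \<beta> \<gamma> = KR_field \<alpha>' \<beta>' \<gamma>'"
  by (auto simp: fun_eq_iff KR_field_def)

lemma KR_field_zero: "KR_field (\<lambda>_. 0) (\<lambda>_. 0) (\<lambda>_. 0) = (\<lambda>_. 0)"
  by (simp add: fun_eq_iff KR_field_def KR_tangent_zero)

lemma KR_field_add_scale:
  "KR_field \<alpha>1 \<beta>1 \<gamma>1 p + c *s KR_field \<alpha>2 \<beta>2 \<gamma>2 p =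
     KR_field (\<lambda>v. \<alpha>1 v + c * \<alpha>2 v) (\<lambda>v. \<beta>1 v + c * \<beta>2 v) (\<lambda>v. \<gamma>1 v + c * \<gamma>2 v) p"
  by (simp add: KR_field_def KR_tangent_add_scale)

lemma has_derivative_KR_field_within:
  assumes "has_xst_derivative \<alpha> \<alpha>x \<alpha>s \<alpha>t" "has_xst_derivative \<beta> \<beta>x \<beta>s \<beta>t" "has_xst_derivative \<gamma> \<gamma>x \<gamma>s \<gamma>t"
    and p: "p \<in> KR - KR_H"
  defines "Da \<equiv> \<lambda>h. \<alpha>x p * h$1 + \<alpha>s p * h$3 + \<alpha>t p * h$4"
    and "Db \<equiv> \<lambda>h. \<beta>x p * h$1 + \<beta>s p * h$3 + \<beta>t p * h$4"
    and "Dc \<equiv> \<lambda>h. \<gamma>x p * h$1 + \<gamma>s p * h$3 + \<gamma>t p * h$4"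
  shows "(KR_field \<alpha> \<beta> \<gamma> has_derivative
           (\<lambda>h. vec4 (Da h) (KR_tangent_y_deriv p (\<alpha> p) (\<beta> p) (\<gamma> p) (Da h) (Db h) (Dc h) h) (Db h) (Dc h)))
         (at p within KR - KR_H)"
proof -
  have "p$1 \<noteq> 0" using p by (simp add: mem_KR_minus_KR_H)
  then have "(\<alpha> has_derivative Da) (at p)" "(\<beta> has_derivative Db) (at p)" "(\<gamma> has_derivative Dc) (at p)"
    using assms(1-3) unfolding has_xst_derivative_def Da_def Db_def Dc_def by blast+
  from has_derivative_KR_tangent_field[OF this \<open>p$1 \<noteq> 0\<close>]
  show ?thesis
    by (rule has_derivative_transform_within[OF has_derivative_at_withinI zero_less_one p])
       (simp add: KR_field_in)
qed

lemma holo_vf_KR_field: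
  assumes "has_xst_derivative \<alpha> \<alpha>x \<alpha>s \<alpha>t" "has_xst_derivative \<beta> \<beta>x \<beta>s \<beta>t" "has_xst_derivative \<gamma> \<gamma>x \<gamma>s \<gamma>t"
  shows "holo_vf (KR - KR_H) (KR_field \<alpha> \<beta> \<gamma>)"
  unfolding holo_vf_def
proof (intro conjI ballI allI impI)
  let ?U = "{v::complex^4. v$1 \<noteq> 0}"
  have "holo_on (\<lambda>v. KR_tangent v (\<alpha> v) (\<beta> v) (\<gamma> v)) ?U"
    unfolding holo_on_def
  proof
    fix v :: "complex^4" assume "v \<in> ?U"
    then have v1: "v$1 \<noteq> 0" by simp
    have da: "(\<alpha> has_derivative (\<lambda>h. \<alpha>x v * h$1 + \<alpha>s v * h$3 + \<alpha>t v * h$4)) (at v)"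
      and db: "(\<beta> has_derivative (\<lambda>h. \<beta>x v * h$1 + \<beta>s v * h$3 + \<beta>t v * h$4)) (at v)"
      and dc: "(\<gamma> has_derivative (\<lambda>h. \<gamma>x v * h$1 + \<gamma>s v * h$3 + \<gamma>t v * h$4)) (at v)"
      using assms v1 unfolding has_xst_derivative_def by blast+
    show "\<exists>L. ((\<lambda>v. KR_tangent v (\<alpha> v) (\<beta> v) (\<gamma> v)) has_derivative L) (at v) \<and> complex_linear L"
    proof (intro exI conjI)
      show "complex_linear (\<lambda>h. vec4 (\<alpha>x v * h$1 + \<alpha>s v * h$3 + \<alpha>t v * h$4)
          (KR_tangent_y_deriv v (\<alpha> v) (\<beta> v) (\<gamma> v) (\<alpha>x v * h$1 + \<alpha>s v * h$3 + \<alpha>t v * h$4)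
            (\<beta>x v * h$1 + \<beta>s v * h$3 + \<beta>t v * h$4) (\<gamma>x v * h$1 + \<gamma>s v * h$3 + \<gamma>t v * h$4) h)
          (\<beta>x v * h$1 + \<beta>s v * h$3 + \<beta>t v * h$4) (\<gamma>x v * h$1 + \<gamma>s v * h$3 + \<gamma>t v * h$4))"
        by (rule complex_linear_KR_tangent_field_deriv) (simp_all add: algebra_simps)
    qed (rule has_derivative_KR_tangent_field[OF da db dc v1])
  qed
  moreover have "open ?U"
    by (rule open_Collect_neq) (auto intro: continuous_intros)
  moreover have "\<forall>q\<in>?U \<inter> (KR - KR_H). KR_tangent q (\<alpha> q) (\<beta> q) (\<gamma> q) = KR_field \<alpha> \<beta> \<gamma> q"
    by (simp add: KR_field_in)
  moreover have "KR - KR_H \<subseteq> ?U"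
    by (auto simp: KR_H_def)
  ultimately show "holo_on_set (KR_field \<alpha> \<beta> \<gamma>) (KR - KR_H)"
    unfolding holo_on_set_def by blast
next
  fix p assume "p \<in> KR - KR_H"
  then show "tangent_vec (KR - KR_H) p (KR_field \<alpha> \<beta> \<gamma> p)"
    by (simp add: KR_field_in tangent_vec_KR_tangent)
qed (rule KR_field_out)

lemma vf_bracket_KR_field:
  assumes h1: "has_xst_derivative \<alpha>1 \<alpha>1x \<alpha>1s \<alpha>1t" "has_xst_derivative \<beta>1 \<beta>1x \<beta>1s \<beta>1t"
      "has_xst_derivative \<gamma>1 \<gamma>1x \<gamma>1s \<gamma>1t"
    and h2: "has_xst_derivative \<alpha>2 \<alpha>2x \<alpha>2s \<alpha>2t" "has_xst_derivative \<beta>2 \<beta>2x \<beta>2s \<beta>2t"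
      "has_xst_derivative \<gamma>2 \<gamma>2x \<gamma>2s \<gamma>2t"
  shows "vf_bracket (KR - KR_H) (KR_field \<alpha>1 \<beta>1 \<gamma>1) (KR_field \<alpha>2 \<beta>2 \<gamma>2) =
    KR_field (\<lambda>v. \<alpha>2x v * \<alpha>1 v + \<alpha>2s v * \<beta>1 v + \<alpha>2t v * \<gamma>1 v - (\<alpha>1x v * \<alpha>2 v + \<alpha>1s v * \<beta>2 v + \<alpha>1t v * \<gamma>2 v))
             (\<lambda>v. \<beta>2x v * \<alpha>1 v + \<beta>2s v * \<beta>1 v + \<beta>2t v * \<gamma>1 v - (\<beta>1x v * \<alpha>2 v + \<beta>1s v * \<beta>2 v + \<beta>1t v * \<gamma>2 v))
             (\<lambda>v. \<gamma>2x v * \<alpha>1 v + \<gamma>2s v * \<beta>1 v + \<gamma>2t v * \<gamma>1 v - (\<gamma>1x v * \<alpha>2 v + \<gamma>1s v * \<beta>2 v + \<gamma>1t v * \<gamma>2 v))"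
    (is "vf_bracket _ ?V ?W = ?R")
proof
  fix p
  show "vf_bracket (KR - KR_H) ?V ?W p = ?R p"
  proof (cases "p \<in> KR - KR_H")
    case False
    then show ?thesis unfolding vf_bracket_def KR_field_def by (simp only: if_False)
  next
    case p: True
    note dV = has_derivative_KR_field_within[OF h1 p]
    note dW = has_derivative_KR_field_within[OF h2 p]
    have sV: "(?V has_derivative (SOME L. (?V has_derivative L) (at p within KR - KR_H))) (at p within KR - KR_H)"
      by (rule someI[where P = "\<lambda>L. (?V has_derivative L) (at p within KR - KR_H)", OF dV])
    have sW: "(?W has_derivative (SOME L. (?W has_derivative L) (at p within KR - KR_H))) (at p within KR - KR_H)"
      by (rule someI[where P = "\<lambda>L. (?W has_derivative L) (at p within KR - KR_H)", OF dW])
    have tV: "tangent_vec (KR - KR_H) p (?V p)" and tW: "tangent_vec (KR - KR_H) p (?W p)"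
      by (simp_all add: KR_field_in[OF p] tangent_vec_KR_tangent[OF p])
    note eV = tangent_vec_derivative_unique[OF sV dV tW]
    note eW = tangent_vec_derivative_unique[OF sW dW tV]
    have "p$1 \<noteq> 0" using p by (simp add: mem_KR_minus_KR_H)
    then show ?thesis
      unfolding vf_bracket_def using p
      by (simp only: if_True eV eW)
         (simp add: KR_field_in[OF p] KR_tangent_def vec4_diff vec4_eq_iff
           KR_tangent_y_deriv_antisym[unfolded KR_tangent_def])
  qed
qed

lemma complete_vf_KR_field:
  assumes "has_xst_derivative \<alpha> \<alpha>x \<alpha>s \<alpha>t" "has_xst_derivative \<beta> \<beta>x \<beta>s \<beta>t" "has_xst_derivative \<gamma> \<gamma>x \<gamma>s \<gamma>t"
    and flow0: "\<And>p. p \<in> KR - KR_H \<Longrightarrow> X 0 p = p$1 \<and> S 0 p = p$3 \<and> T 0 p = p$4"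
    and flow_nz: "\<And>p t. p \<in> KR - KR_H \<Longrightarrow> X t p \<noteq> 0"
    and flow_x: "\<And>p t. p \<in> KR - KR_H \<Longrightarrow>
      ((\<lambda>t. X t p) has_field_derivative \<alpha> (KR_point (X t p) (S t p) (T t p))) (at t)"
    and flow_s: "\<And>p t. p \<in> KR - KR_H \<Longrightarrow>
      ((\<lambda>t. S t p) has_field_derivative \<beta> (KR_point (X t p) (S t p) (T t p))) (at t)"
    and flow_t: "\<And>p t. p \<in> KR - KR_H \<Longrightarrow>
      ((\<lambda>t. T t p) has_field_derivative \<gamma> (KR_point (X t p) (S t p) (T t p))) (at t)"
  shows "complete_vf (KR - KR_H) (KR_field \<alpha> \<beta> \<gamma>)"
  unfolding complete_vf_def
proof (intro conjI holo_vf_KR_field[OF assms(1-3)] exI[where x = "\<lambda>t p. KR_point (X t p) (S t p) (T t p)"]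
    ballI allI)
  fix p t assume p: "p \<in> KR - KR_H"
  show "KR_point (X 0 p) (S 0 p) (T 0 p) = p" using flow0[OF p] KR_point_coords[OF p] by simp
  show "KR_point (X t p) (S t p) (T t p) \<in> KR - KR_H"
    by (rule KR_point_in_KR_minus_KR_H[OF flow_nz[OF p]])
  then show "((\<lambda>s. KR_point (X s p) (S s p) (T s p)) has_derivative
          (\<lambda>s. s *s KR_field \<alpha> \<beta> \<gamma> (KR_point (X t p) (S t p) (T t p)))) (at t)"
    using has_derivative_KR_point[OF flow_x[OF p] flow_s[OF p] flow_t[OF p] flow_nz[OF p]]
    by (simp add: KR_field_in)
qed

section \<open>The Lie algebra generated by complete fields\<close>

abbreviation KR_lie_alg :: "(complex^4 \<Rightarrow> complex^4) set" where
  "KR_lie_alg \<equiv> complete_lie_alg (KR - KR_H)"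

lemma KR_field_zero_in_lie: "KR_field (\<lambda>_. 0) (\<lambda>_. 0) (\<lambda>_. 0) \<in> KR_lie_alg"
  unfolding KR_field_zero by (rule complete_lie_alg.zero)

lemma KR_field_lincomb_in_lie:
  assumes "KR_field \<alpha>1 \<beta>1 \<gamma>1 \<in> KR_lie_alg" "KR_field \<alpha>2 \<beta>2 \<gamma>2 \<in> KR_lie_alg"
  shows "KR_field (\<lambda>v. \<alpha>1 v + c * \<alpha>2 v) (\<lambda>v. \<beta>1 v + c * \<beta>2 v) (\<lambda>v. \<gamma>1 v + c * \<gamma>2 v) \<in> KR_lie_alg"
  using complete_lie_alg.add[OF assms(1) complete_lie_alg.smult[OF assms(2)]]
  unfolding KR_field_add_scale .

lemma KR_field_scale_in_lie:
  "KR_field \<alpha> \<beta> \<gamma> \<in> KR_lie_alg \<Longrightarrow> KR_field (\<lambda>v. c * \<alpha> v) (\<lambda>v. c * \<beta> v) (\<lambda>v. c * \<gamma> v) \<in> KR_lie_alg"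
  using KR_field_lincomb_in_lie[OF KR_field_zero_in_lie, of \<alpha> \<beta> \<gamma> c] by simp

lemma KR_field_in_lie_cong:
  "KR_field \<alpha> \<beta> \<gamma> \<in> KR_lie_alg \<Longrightarrow> (\<And>v. v \<in> KR - KR_H \<Longrightarrow> \<alpha> v = \<alpha>' v \<and> \<beta> v = \<beta>' v \<and> \<gamma> v = \<gamma>' v) \<Longrightarrow>
     KR_field \<alpha>' \<beta>' \<gamma>' \<in> KR_lie_alg"
  using KR_field_cong by metis

lemma KR_field_bracket_in_lie:
  assumes "has_xst_derivative \<alpha>1 \<alpha>1x \<alpha>1s \<alpha>1t" "has_xst_derivative \<beta>1 \<beta>1x \<beta>1s \<beta>1t"
      "has_xst_derivative \<gamma>1 \<gamma>1x \<gamma>1s \<gamma>1t"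
    and "has_xst_derivative \<alpha>2 \<alpha>2x \<alpha>2s \<alpha>2t" "has_xst_derivative \<beta>2 \<beta>2x \<beta>2s \<beta>2t"
      "has_xst_derivative \<gamma>2 \<gamma>2x \<gamma>2s \<gamma>2t"
    and "KR_field \<alpha>1 \<beta>1 \<gamma>1 \<in> KR_lie_alg" "KR_field \<alpha>2 \<beta>2 \<gamma>2 \<in> KR_lie_alg"
  shows "KR_field
      (\<lambda>v. \<alpha>2x v * \<alpha>1 v + \<alpha>2s v * \<beta>1 v + \<alpha>2t v * \<gamma>1 v - (\<alpha>1x v * \<alpha>2 v + \<alpha>1s v * \<beta>2 v + \<alpha>1t v * \<gamma>2 v))
      (\<lambda>v. \<beta>2x v * \<alpha>1 v + \<beta>2s v * \<beta>1 v + \<beta>2t v * \<gamma>1 v - (\<beta>1x v * \<alpha>2 v + \<beta>1s v * \<beta>2 v + \<beta>1t v * \<gamma>2 v))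
      (\<lambda>v. \<gamma>2x v * \<alpha>1 v + \<gamma>2s v * \<beta>1 v + \<gamma>2t v * \<gamma>1 v - (\<gamma>1x v * \<alpha>2 v + \<gamma>1s v * \<beta>2 v + \<gamma>1t v * \<gamma>2 v))
    \<in> KR_lie_alg"
  using complete_lie_alg.bracket[OF assms(7,8)] unfolding vf_bracket_KR_field[OF assms(1-6)] .

definition xst_monomial :: "int \<Rightarrow> nat \<Rightarrow> nat \<Rightarrow> complex^4 \<Rightarrow> complex" where
  "xst_monomial k a b v = (v$1) powi k * (v$3)^a * (v$4)^b"

lemma has_xst_derivative_monomial:
  "has_xst_derivative (xst_monomial k a b)
     (\<lambda>v. of_int k * (v$1) powi (k - 1) * (v$3)^a * (v$4)^b)
     (\<lambda>v. of_nat a * (v$1) powi k * (v$3)^(a - 1) * (v$4)^b)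
     (\<lambda>v. of_nat b * (v$1) powi k * (v$3)^a * (v$4)^(b - 1))"
  unfolding has_xst_derivative_def xst_monomial_def
  by (auto intro!: has_derivative_eq_rhs[OF derivative_eq_intros(1)] derivative_eq_intros
      simp: fun_eq_iff algebra_simps)

lemma has_xst_derivative_zero: "has_xst_derivative (\<lambda>_. 0) (\<lambda>_. 0) (\<lambda>_. 0) (\<lambda>_. 0)"
  unfolding has_xst_derivative_def by (auto intro!: derivative_eq_intros)

lemma complete_vf_ds_shear: "complete_vf (KR - KR_H) (KR_field (\<lambda>_. 0) (xst_monomial k 0 b) (\<lambda>_. 0))"
  by (rule complete_vf_KR_field[OF has_xst_derivative_zero has_xst_derivative_monomial has_xst_derivative_zero,
        where X = "\<lambda>\<tau> p. p$1" and S = "\<lambda>\<tau> p. p$3 + \<tau> * xst_monomial k 0 b p" and T = "\<lambda>\<tau> p. p$4"])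
     (auto simp: mem_KR_minus_KR_H xst_monomial_def intro!: derivative_eq_intros)

lemma complete_vf_dt_shear: "complete_vf (KR - KR_H) (KR_field (\<lambda>_. 0) (\<lambda>_. 0) (xst_monomial k a 0))"
  by (rule complete_vf_KR_field[OF has_xst_derivative_zero has_xst_derivative_zero has_xst_derivative_monomial,
        where X = "\<lambda>\<tau> p. p$1" and S = "\<lambda>\<tau> p. p$3" and T = "\<lambda>\<tau> p. p$4 + \<tau> * xst_monomial k a 0 p"])
     (auto simp: mem_KR_minus_KR_H xst_monomial_def intro!: derivative_eq_intros)

lemma complete_vf_ds_overshear: "complete_vf (KR - KR_H) (KR_field (\<lambda>_. 0) (xst_monomial k 1 b) (\<lambda>_. 0))"
  by (rule complete_vf_KR_field[OF has_xst_derivative_zero has_xst_derivative_monomial has_xst_derivative_zero,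
        where X = "\<lambda>\<tau> p. p$1" and S = "\<lambda>\<tau> p. p$3 * exp (\<tau> * xst_monomial k 0 b p)" and T = "\<lambda>\<tau> p. p$4"])
     (auto simp: mem_KR_minus_KR_H xst_monomial_def intro!: derivative_eq_intros)

lemma complete_vf_dt_overshear: "complete_vf (KR - KR_H) (KR_field (\<lambda>_. 0) (\<lambda>_. 0) (xst_monomial k a 1))"
  by (rule complete_vf_KR_field[OF has_xst_derivative_zero has_xst_derivative_zero has_xst_derivative_monomial,
        where X = "\<lambda>\<tau> p. p$1" and S = "\<lambda>\<tau> p. p$3" and T = "\<lambda>\<tau> p. p$4 * exp (\<tau> * xst_monomial k a 0 p)"])
     (auto simp: mem_KR_minus_KR_H xst_monomial_def intro!: derivative_eq_intros)

lemma complete_vf_dx_overshear: "complete_vf (KR - KR_H) (KR_field (xst_monomial 1 a b) (\<lambda>_. 0) (\<lambda>_. 0))"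
  by (rule complete_vf_KR_field[OF has_xst_derivative_monomial has_xst_derivative_zero has_xst_derivative_zero,
        where X = "\<lambda>\<tau> p. p$1 * exp (\<tau> * xst_monomial 0 a b p)" and S = "\<lambda>\<tau> p. p$3" and T = "\<lambda>\<tau> p. p$4"])
     (auto simp: mem_KR_minus_KR_H xst_monomial_def intro!: derivative_eq_intros)

lemma KR_field_ds_monomial_t_free_in_lie: "KR_field (\<lambda>_. 0) (xst_monomial k a 0) (\<lambda>_. 0) \<in> KR_lie_alg"
proof (cases a)
  case 0
  then show ?thesis using complete_lie_alg.gen[OF complete_vf_ds_shear[of k 0]] by simp
next
  case (Suc a')
  \<comment> \<open>[x^k s^a \<partial>t, t \<partial>s] = x^k s^a \<partial>s - a x^k s^(a-1) t \<partial>t\<close>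
  note bracket = KR_field_bracket_in_lie[OF has_xst_derivative_zero has_xst_derivative_zero has_xst_derivative_monomial
      has_xst_derivative_zero has_xst_derivative_monomial has_xst_derivative_zero
      complete_lie_alg.gen[OF complete_vf_dt_shear[of k a]] complete_lie_alg.gen[OF complete_vf_ds_shear[of 0 1]]]
  show ?thesis
    by (rule KR_field_in_lie_cong[OF KR_field_lincomb_in_lie[OF bracket complete_lie_alg.gen[OF complete_vf_dt_overshear[of k a']],
          where c = "of_nat a"]])
       (use Suc in \<open>auto simp: xst_monomial_def\<close>)
qed

lemma KR_field_ds_monomial_in_lie: "KR_field (\<lambda>_. 0) (xst_monomial k a b) (\<lambda>_. 0) \<in> KR_lie_alg"
proof (cases "a = 1")
  case True
  then show ?thesis using complete_lie_alg.gen[OF complete_vf_ds_overshear] by simp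
next
  case False
  \<comment> \<open>[x^k s^a \<partial>s, s t^b \<partial>s] = (1 - a) x^k s^a t^b \<partial>s\<close>
  note bracket = KR_field_bracket_in_lie[OF has_xst_derivative_zero has_xst_derivative_monomial has_xst_derivative_zero
      has_xst_derivative_zero has_xst_derivative_monomial has_xst_derivative_zero
      KR_field_ds_monomial_t_free_in_lie[of k a] complete_lie_alg.gen[OF complete_vf_ds_overshear[of 0 b]]]
  have "1 - of_nat a \<noteq> (0::complex)" using False by (metis eq_iff_diff_eq_0 of_nat_eq_1_iff)
  then show ?thesis
    by (intro KR_field_in_lie_cong[OF KR_field_scale_in_lie[OF bracket, where c = "1 / (1 - of_nat a)"]])
       (cases a; auto simp: xst_monomial_def field_simps)
qed

lemma KR_field_dt_monomial_s_free_in_lie: "KR_field (\<lambda>_. 0) (\<lambda>_. 0) (xst_monomial k 0 b) \<in> KR_lie_alg"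
proof (cases b)
  case 0
  then show ?thesis using complete_lie_alg.gen[OF complete_vf_dt_shear[of k 0]] by simp
next
  case (Suc b')
  \<comment> \<open>[x^k t^b \<partial>s, s \<partial>t] = x^k t^b \<partial>t - b x^k s t^(b-1) \<partial>s\<close>
  note bracket = KR_field_bracket_in_lie[OF has_xst_derivative_zero has_xst_derivative_monomial has_xst_derivative_zero
      has_xst_derivative_zero has_xst_derivative_zero has_xst_derivative_monomial
      complete_lie_alg.gen[OF complete_vf_ds_shear[of k b]] complete_lie_alg.gen[OF complete_vf_dt_shear[of 0 1]]]
  show ?thesis
    by (rule KR_field_in_lie_cong[OF KR_field_lincomb_in_lie[OF bracket complete_lie_alg.gen[OF complete_vf_ds_overshear[of k b']],
          where c = "of_nat b"]])
       (use Suc in \<open>auto simp: xst_monomial_def\<close>)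
qed

lemma KR_field_dt_monomial_in_lie: "KR_field (\<lambda>_. 0) (\<lambda>_. 0) (xst_monomial k a b) \<in> KR_lie_alg"
proof (cases "b = 1")
  case True
  then show ?thesis using complete_lie_alg.gen[OF complete_vf_dt_overshear] by simp
next
  case False
  \<comment> \<open>[x^k t^b \<partial>t, s^a t \<partial>t] = (1 - b) x^k s^a t^b \<partial>t\<close>
  note bracket = KR_field_bracket_in_lie[OF has_xst_derivative_zero has_xst_derivative_zero has_xst_derivative_monomial
      has_xst_derivative_zero has_xst_derivative_zero has_xst_derivative_monomial
      KR_field_dt_monomial_s_free_in_lie[of k b] complete_lie_alg.gen[OF complete_vf_dt_overshear[of 0 a]]]
  have "1 - of_nat b \<noteq> (0::complex)" using False by (metis eq_iff_diff_eq_0 of_nat_eq_1_iff)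
  then show ?thesis
    by (intro KR_field_in_lie_cong[OF KR_field_scale_in_lie[OF bracket, where c = "1 / (1 - of_nat b)"]])
       (cases b; auto simp: xst_monomial_def field_simps)
qed

lemma KR_field_dx_monomial_in_lie: "KR_field (xst_monomial k a b) (\<lambda>_. 0) (\<lambda>_. 0) \<in> KR_lie_alg"
proof -
  \<comment> \<open>[x^(k-1) \<partial>s, x s^(a+1) t^b \<partial>x] = (a + 1) x^k s^a t^b \<partial>x - (k - 1) x^(k-1) s^(a+1) t^b \<partial>s\<close>
  note bracket = KR_field_bracket_in_lie[OF has_xst_derivative_zero has_xst_derivative_monomial has_xst_derivative_zero
      has_xst_derivative_monomial has_xst_derivative_zero has_xst_derivative_zero
      complete_lie_alg.gen[OF complete_vf_ds_shear[of "k - 1" 0]] complete_lie_alg.gen[OF complete_vf_dx_overshear[of "a + 1" b]]]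
  note sum = KR_field_lincomb_in_lie[OF bracket KR_field_ds_monomial_in_lie[of "k - 1" "a + 1" b],
      where c = "of_int (k - 1)"]
  have a1: "(of_nat a + 1 :: complex) \<noteq> 0"
    by (metis of_nat_Suc of_nat_eq_0_iff add.commute nat.distinct(1))
  show ?thesis
  proof (rule KR_field_in_lie_cong[OF KR_field_scale_in_lie[OF sum, where c = "1 / (of_nat a + 1)"]], goal_cases)
    case (1 v)
    then have x: "v$1 \<noteq> 0" by (simp add: mem_KR_minus_KR_H)
    have e: "v$1 powi (k - 1 - 1) = v$1 powi (k - 2)" "v$1 powi (k - 1) = v$1 powi (k - 2) * v$1"
      "v$1 powi k = v$1 powi (k - 2) * v$1 * v$1"
      using x by (simp_all add: power_int_diff field_simps power2_eq_square)
    from x a1 show ?case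
      by (simp only: xst_monomial_def e) (simp add: field_simps)
  qed
qed

lemma pointwise_sum_closed:
  assumes "Q (\<lambda>_. 0)" "\<And>\<phi> \<psi>. Q \<phi> \<Longrightarrow> Q \<psi> \<Longrightarrow> Q (\<lambda>v. \<phi> v + \<psi> v)"
    and "finite I" "\<And>i. i \<in> I \<Longrightarrow> Q (g i)"
  shows "Q (\<lambda>v. \<Sum>i\<in>I. g i v)"
  using assms(3,4)
proof (induction I rule: finite_induct)
  case (insert i I)
  then show ?case using assms(2)[of "g i" "\<lambda>v. \<Sum>i\<in>I. g i v"] by simp
qed (simp add: assms(1))

lemma laurent_poly_span_induct:
  fixes Q :: "(complex^4 \<Rightarrow> complex) \<Rightarrow> bool"
  assumes zero: "Q (\<lambda>_. 0)" and add: "\<And>\<phi> \<psi>. Q \<phi> \<Longrightarrow> Q \<psi> \<Longrightarrow> Q (\<lambda>v. \<phi> v + \<psi> v)"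
    and monomial: "\<And>k a b c. Q (\<lambda>v. c * xst_monomial k a b v)"
  shows "Q (\<lambda>v. laurent_poly N A B (v$1) (v$3) (v$4))"
proof -
  have "Q (\<lambda>v. (A n m l * (v$1)^n + B n m l * (v$1) powi (- (int n + 1))) * (v$3)^m * (v$4)^l)" for n m l
  proof -
    have "Q (\<lambda>v. A n m l * xst_monomial (int n) m l v + B n m l * xst_monomial (- (int n + 1)) m l v)"
      by (intro add monomial)
    then show ?thesis
      by (simp add: xst_monomial_def algebra_simps power_int_of_nat)
  qed
  then show ?thesis
    unfolding laurent_poly_def by (intro pointwise_sum_closed[where Q = Q, OF zero add]) auto
qed

lemma KR_field_laurent_poly_in_lie:
  "KR_field (\<lambda>v. laurent_poly N1 A1 B1 (v$1) (v$3) (v$4)) (\<lambda>v. laurent_poly N3 A3 B3 (v$1) (v$3) (v$4))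
     (\<lambda>v. laurent_poly N4 A4 B4 (v$1) (v$3) (v$4)) \<in> KR_lie_alg"
proof -
  have x: "KR_field (\<lambda>v. laurent_poly N1 A1 B1 (v$1) (v$3) (v$4)) (\<lambda>_. 0) (\<lambda>_. 0) \<in> KR_lie_alg"
  proof (rule laurent_poly_span_induct[where Q = "\<lambda>\<phi>. KR_field \<phi> (\<lambda>_. 0) (\<lambda>_. 0) \<in> KR_lie_alg"])
    show "KR_field (\<lambda>v. \<phi> v + \<psi> v) (\<lambda>_. 0) (\<lambda>_. 0) \<in> KR_lie_alg"
      if "KR_field \<phi> (\<lambda>_. 0) (\<lambda>_. 0) \<in> KR_lie_alg" "KR_field \<psi> (\<lambda>_. 0) (\<lambda>_. 0) \<in> KR_lie_alg" for \<phi> \<psi>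
      using KR_field_lincomb_in_lie[OF that, of 1] by simp
    show "KR_field (\<lambda>v. c * xst_monomial k a b v) (\<lambda>_. 0) (\<lambda>_. 0) \<in> KR_lie_alg" for k a b c
      using KR_field_scale_in_lie[OF KR_field_dx_monomial_in_lie, of c k a b] by simp
  qed (rule KR_field_zero_in_lie)
  have s: "KR_field (\<lambda>_. 0) (\<lambda>v. laurent_poly N3 A3 B3 (v$1) (v$3) (v$4)) (\<lambda>_. 0) \<in> KR_lie_alg"
  proof (rule laurent_poly_span_induct[where Q = "\<lambda>\<phi>. KR_field (\<lambda>_. 0) \<phi> (\<lambda>_. 0) \<in> KR_lie_alg"])
    show "KR_field (\<lambda>_. 0) (\<lambda>v. \<phi> v + \<psi> v) (\<lambda>_. 0) \<in> KR_lie_alg"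
      if "KR_field (\<lambda>_. 0) \<phi> (\<lambda>_. 0) \<in> KR_lie_alg" "KR_field (\<lambda>_. 0) \<psi> (\<lambda>_. 0) \<in> KR_lie_alg" for \<phi> \<psi>
      using KR_field_lincomb_in_lie[OF that, of 1] by simp
    show "KR_field (\<lambda>_. 0) (\<lambda>v. c * xst_monomial k a b v) (\<lambda>_. 0) \<in> KR_lie_alg" for k a b c
      using KR_field_scale_in_lie[OF KR_field_ds_monomial_in_lie, of c k a b] by simp
  qed (rule KR_field_zero_in_lie)
  have t: "KR_field (\<lambda>_. 0) (\<lambda>_. 0) (\<lambda>v. laurent_poly N4 A4 B4 (v$1) (v$3) (v$4)) \<in> KR_lie_alg"
  proof (rule laurent_poly_span_induct[where Q = "\<lambda>\<phi>. KR_field (\<lambda>_. 0) (\<lambda>_. 0) \<phi> \<in> KR_lie_alg"])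
    show "KR_field (\<lambda>_. 0) (\<lambda>_. 0) (\<lambda>v. \<phi> v + \<psi> v) \<in> KR_lie_alg"
      if "KR_field (\<lambda>_. 0) (\<lambda>_. 0) \<phi> \<in> KR_lie_alg" "KR_field (\<lambda>_. 0) (\<lambda>_. 0) \<psi> \<in> KR_lie_alg" for \<phi> \<psi>
      using KR_field_lincomb_in_lie[OF that, of 1] by simp
    show "KR_field (\<lambda>_. 0) (\<lambda>_. 0) (\<lambda>v. c * xst_monomial k a b v) \<in> KR_lie_alg" for k a b c
      using KR_field_scale_in_lie[OF KR_field_dt_monomial_in_lie, of c k a b] by simp
  qed (rule KR_field_zero_in_lie)
  show ?thesis
    using KR_field_lincomb_in_lie[OF KR_field_lincomb_in_lie[OF x s, of 1] t, of 1] by simp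
qed

section \<open>Approximation of holomorphic vector fields\<close>

lemma separately_holomorphic_KR_component:
  assumes V: "holo_vf (KR - KR_H) V"
  shows "separately_holomorphic (\<lambda>x s t. V (KR_point x s t) $ i)"
proof
  have "continuous_on {q. fst q \<noteq> 0} (\<lambda>q. KR_point (fst q) (fst (snd q)) (snd (snd q)))"
    unfolding KR_point_def KR_y_def by (intro continuous_intros) auto
  moreover have "(\<lambda>q. KR_point (fst q) (fst (snd q)) (snd (snd q))) ` {q. fst q \<noteq> 0} \<subseteq> KR - KR_H"
    using KR_point_in_KR_minus_KR_H by blast
  ultimately show "continuous_on {q. fst q \<noteq> 0} (\<lambda>q. V (KR_point (fst q) (fst (snd q)) (snd (snd q))) $ i)"
    by (intro continuous_on_component continuous_on_compose2[OF holo_vf_continuous_on[OF V]])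
  show "(\<lambda>x. V (KR_point x s t) $ i) holomorphic_on -{0}" for s t
    by (rule holo_vf_comp_curve_holomorphic[OF V])
       (auto intro!: has_derivative_KR_point derivative_eq_intros KR_point_in_KR_minus_KR_H)
  show "(\<lambda>s. V (KR_point x s t) $ i) holomorphic_on UNIV" if "x \<noteq> 0" for x t
    by (rule holo_vf_comp_curve_holomorphic[OF V])
       (use that in \<open>auto intro!: has_derivative_KR_point derivative_eq_intros KR_point_in_KR_minus_KR_H\<close>)
  show "(\<lambda>t. V (KR_point x s t) $ i) holomorphic_on UNIV" if "x \<noteq> 0" for x s
    by (rule holo_vf_comp_curve_holomorphic[OF V])
       (use that in \<open>auto intro!: has_derivative_KR_point derivative_eq_intros KR_point_in_KR_minus_KR_H\<close>)
qed

lemma holo_vf_KR_component_approx: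
  assumes V: "holo_vf (KR - KR_H) V" and "0 < r" "r \<le> R" "\<delta> > 0"
  obtains N A B where "\<And>p. p \<in> KR - KR_H \<Longrightarrow> in_annulus_bidisc r R (p$1) (p$3) (p$4) \<Longrightarrow>
    norm (V p $ i - laurent_poly N A B (p$1) (p$3) (p$4)) < \<delta>"
proof -
  interpret separately_holomorphic "\<lambda>x s t. V (KR_point x s t) $ i"
    by (rule separately_holomorphic_KR_component[OF V])
  obtain N A B where approx: "\<And>x s t. in_annulus_bidisc r R x s t \<Longrightarrow>
      norm (V (KR_point x s t) $ i - laurent_poly N A B x s t) < \<delta>"
    using laurent_poly_approx[OF assms(2-4)] by blast
  show ?thesis
  proof (rule that)
    fix p assume "p \<in> KR - KR_H" "in_annulus_bidisc r R (p$1) (p$3) (p$4)"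
    then show "norm (V p $ i - laurent_poly N A B (p$1) (p$3) (p$4)) < \<delta>"
      using approx[of "p$1" "p$3" "p$4"] by (simp only: KR_point_coords)
  qed
qed

lemma compact_imp_in_annulus_bidisc:
  fixes K :: "(complex^4) set"
  assumes "compact K" "\<And>v. v \<in> K \<Longrightarrow> v$1 \<noteq> 0"
  obtains r R where "0 < r" "r \<le> R" "\<And>v. v \<in> K \<Longrightarrow> in_annulus_bidisc r R (v$1) (v$3) (v$4)"
proof -
  obtain B where B: "\<forall>v\<in>K. norm v \<le> B"
    using compact_imp_bounded[OF assms(1)] bounded_iff by blast
  have "continuous_on K (\<lambda>v. inverse (v$1))"
    using assms(2) by (intro continuous_intros) auto
  from compact_imp_bounded[OF compact_continuous_image[OF this assms(1)]]
  obtain B' where B': "\<forall>y\<in>(\<lambda>v. inverse (v$1)) ` K. norm y \<le> B'"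
    unfolding bounded_iff by blast
  define r where "r = 1 / max B' 1"
  define R where "R = max B r"
  show ?thesis
  proof (rule that)
    show "0 < r" "r \<le> R" unfolding r_def R_def by auto
    fix v assume v: "v \<in> K"
    have "norm (v$i) \<le> R" for i
      using B v Finite_Cartesian_Product.norm_nth_le[of v i] unfolding R_def by force
    moreover have "norm (inverse (v$1)) \<le> max B' 1"
      using B' v by force
    then have "1 / norm (v$1) \<le> max B' 1"
      by (simp add: norm_inverse divide_inverse)
    then have "r \<le> norm (v$1)"
      unfolding r_def using assms(2)[OF v] by (simp add: field_simps)
    ultimately show "in_annulus_bidisc r R (v$1) (v$3) (v$4)"
      unfolding in_annulus_bidisc_def by auto
  qed
qed

lemma norm_KR_tangent_le:
  "norm (KR_tangent p a b c) \<le> (1 + (norm (2 * p$1 * p$2 + 1) + 2 * norm (p$3) + 3 * norm (p$4)^2) / norm (p$1)^2)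
     * (norm a + norm b + norm c)"
proof -
  define d where "d = norm a + norm b + norm c"
  define g where "g = (norm (2 * p$1 * p$2 + 1) + 2 * norm (p$3) + 3 * norm (p$4)^2) / norm (p$1)^2"
  have "norm ((2 * p$1 * p$2 + 1) * a + 2 * p$3 * b + 3 * (p$4)^2 * c)
      \<le> norm (2 * p$1 * p$2 + 1) * norm a + 2 * norm (p$3) * norm b + 3 * norm (p$4)^2 * norm c"
    by (rule order_trans[OF norm_triangle_ineq] order_trans[OF add_mono[OF norm_triangle_ineq order_refl]])+
       (simp add: norm_mult norm_power)
  also have "\<dots> \<le> (norm (2 * p$1 * p$2 + 1) + 2 * norm (p$3) + 3 * norm (p$4)^2) * d"
    unfolding d_def by (simp add: algebra_simps add_mono mult_left_mono)
  finally have "norm (KR_tangent_y p a b c) \<le> g * d"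
    unfolding KR_tangent_y_def g_def norm_divide norm_minus_cancel norm_power
    by (simp add: divide_right_mono)
  then have "norm (KR_tangent p a b c) \<le> norm a + g * d + norm b + norm c"
    using norm_vec4_le[of a "KR_tangent_y p a b c" b c] unfolding KR_tangent_def by linarith
  then show ?thesis
    unfolding g_def[symmetric] d_def by (simp add: algebra_simps)
qed

lemma KR_tangent_bounded_on_compact:
  assumes "compact K" "K \<subseteq> KR - KR_H"
  obtains C where "C > 0" "\<And>p a b c. p \<in> K \<Longrightarrow> norm (KR_tangent p a b c) \<le> C * (norm a + norm b + norm c)"
proof -
  let ?g = "\<lambda>p::complex^4. (norm (2 * p$1 * p$2 + 1) + 2 * norm (p$3) + 3 * norm (p$4)^2) / norm (p$1)^2"
  have "p$1 \<noteq> 0" if "p \<in> K" for p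
    using subsetD[OF assms(2) that] by (simp add: mem_KR_minus_KR_H)
  then have "continuous_on K ?g"
    by (intro continuous_intros) auto
  from compact_imp_bounded[OF compact_continuous_image[OF this assms(1)]]
  obtain C0 where C0: "\<forall>y\<in>?g ` K. norm y \<le> C0"
    unfolding bounded_iff by blast
  show ?thesis
  proof (rule that)
    show "1 + max C0 0 > 0" by simp
    fix p a b c assume "p \<in> K"
    then have "?g p \<le> C0" using C0 by fastforce
    then have g_le: "1 + ?g p \<le> 1 + max C0 0" by linarith
    show "norm (KR_tangent p a b c) \<le> (1 + max C0 0) * (norm a + norm b + norm c)"
      by (rule order_trans[OF norm_KR_tangent_le mult_right_mono[OF g_le]]) simp
  qed
qed

lemma holo_vf_minus_KR_field:
  assumes "holo_vf (KR - KR_H) V" "p \<in> KR - KR_H"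
  shows "V p - KR_field \<alpha> \<beta> \<gamma> p = KR_tangent p (V p $ 1 - \<alpha> p) (V p $ 3 - \<beta> p) (V p $ 4 - \<gamma> p)"
proof -
  have "tangent_vec (KR - KR_H) p (V p)"
    using assms unfolding holo_vf_def by blast
  then have "V p = KR_tangent p (V p $ 1) (V p $ 3) (V p $ 4)"
    by (rule tangent_vec_KR_eq_KR_tangent[OF assms(2)])
  then show ?thesis
    by (metis KR_field_in[OF assms(2)] KR_tangent_diff)
qed

lemma KR_lie_alg_approx_components:
  assumes V: "holo_vf (KR - KR_H) V" and "0 < r" "r \<le> R" "\<delta> > 0"
  obtains \<alpha> \<beta> \<gamma> where "KR_field \<alpha> \<beta> \<gamma> \<in> KR_lie_alg"
    and "\<And>p. p \<in> KR - KR_H \<Longrightarrow> in_annulus_bidisc r R (p$1) (p$3) (p$4) \<Longrightarrow>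
      norm (V p $ 1 - \<alpha> p) < \<delta> \<and> norm (V p $ 3 - \<beta> p) < \<delta> \<and> norm (V p $ 4 - \<gamma> p) < \<delta>"
proof -
  obtain N1 A1 B1 N3 A3 B3 N4 A4 B4 where
    "\<And>p. p \<in> KR - KR_H \<Longrightarrow> in_annulus_bidisc r R (p$1) (p$3) (p$4) \<Longrightarrow>
       norm (V p $ 1 - laurent_poly N1 A1 B1 (p$1) (p$3) (p$4)) < \<delta>"
    "\<And>p. p \<in> KR - KR_H \<Longrightarrow> in_annulus_bidisc r R (p$1) (p$3) (p$4) \<Longrightarrow>
       norm (V p $ 3 - laurent_poly N3 A3 B3 (p$1) (p$3) (p$4)) < \<delta>"
    "\<And>p. p \<in> KR - KR_H \<Longrightarrow> in_annulus_bidisc r R (p$1) (p$3) (p$4) \<Longrightarrow>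
       norm (V p $ 4 - laurent_poly N4 A4 B4 (p$1) (p$3) (p$4)) < \<delta>"
    using holo_vf_KR_component_approx[OF assms, of 1] holo_vf_KR_component_approx[OF assms, of 3]
      holo_vf_KR_component_approx[OF assms, of 4] by metis
  then show ?thesis
    by (intro that[OF KR_field_laurent_poly_in_lie]) auto
qed

theorem lemma5p3:
  shows "density_property (KR - KR_H)"
  unfolding density_property_def
proof (intro allI impI, elim conjE)
  fix V K and e :: real
  assume V: "holo_vf (KR - KR_H) V" and K: "compact K" "K \<subseteq> KR - KR_H" and e: "e > 0"
  obtain C where C: "C > 0" "\<And>p a b c. p \<in> K \<Longrightarrow> norm (KR_tangent p a b c) \<le> C * (norm a + norm b + norm c)"
    using KR_tangent_bounded_on_compact[OF K] by blast
  have "v$1 \<noteq> 0" if "v \<in> K" for v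
    using subsetD[OF K(2) that] by (simp add: mem_KR_minus_KR_H)
  then obtain r R where r: "0 < r" "r \<le> R" and K_region: "\<And>p. p \<in> K \<Longrightarrow> in_annulus_bidisc r R (p$1) (p$3) (p$4)"
    using compact_imp_in_annulus_bidisc[OF K(1)] by blast
  obtain \<alpha> \<beta> \<gamma> where W: "KR_field \<alpha> \<beta> \<gamma> \<in> KR_lie_alg" and approx: "\<And>p. p \<in> KR - KR_H \<Longrightarrow>
      in_annulus_bidisc r R (p$1) (p$3) (p$4) \<Longrightarrow>
      norm (V p $ 1 - \<alpha> p) < e / (3 * C) \<and> norm (V p $ 3 - \<beta> p) < e / (3 * C) \<and> norm (V p $ 4 - \<gamma> p) < e / (3 * C)"
    using KR_lie_alg_approx_components[OF V r, of "e / (3 * C)"] e C(1) by auto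
  have "norm (V p - KR_field \<alpha> \<beta> \<gamma> p) < e" if p: "p \<in> K" for p
  proof -
    have pM: "p \<in> KR - KR_H" using K(2) p by blast
    have "norm (V p - KR_field \<alpha> \<beta> \<gamma> p) \<le> C * (norm (V p $ 1 - \<alpha> p) + norm (V p $ 3 - \<beta> p) + norm (V p $ 4 - \<gamma> p))"
      unfolding holo_vf_minus_KR_field[OF V pM] by (rule C(2)[OF p])
    also have "\<dots> < C * (e / (3 * C) + e / (3 * C) + e / (3 * C))"
      using approx[OF pM K_region[OF p]] C(1) by (intro mult_strict_left_mono) auto
    finally show ?thesis using C(1) by simp
  qed
  with W show "\<exists>W\<in>complete_lie_alg (KR - KR_H). \<forall>p\<in>K. norm (V p - W p) < e" by blast
qed

end
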